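(* Let $G$ be a plane graph and let $s_0,s_1$ be two distinct vertices on the outer face of $G$. Then the weak labelings of $G$ with special vertices $s_0,s_1$ are in bijection with the pairs $(X,X^* )$, where $X$ is a $2$-orientation of $G$ and $X^*$ is a $2^*$-orientation of the split-dual $G^*_s$.
   Context: An angle of a plane graph is an incidence of a vertex with a face, i.e. a corner of a face at a vertex (between two consecutive edges in the rotation at the vertex). A weak labeling of a plane graph $G$ is a map from the angles of $G$ to $\{0,1\}$ such that: (G0) there are two special vertices $s_0,s_1$ on the outer face with all angles at $s_i$ labeled $i$; (G1) for each vertex $v\notin\{s_0,s_1\}$ the labels around $v$ form one non-empty cyclic interval of $1$s and one non-empty cyclic interval of $0$s; (G2) for each edge, the two labels on the two sides of the edge coincide at one endpoint and differ at the other; (G3) for each face (including the outer face), its labels, read cyclically along the face, form one non-empty interval of $1$s and one non-empty interval of $0$s. A $2$-orientation of $G$ (with respect to $s_0,s_1$) is an orientation of the edges in which every vertex other than $s_0,s_1$ has outdegree exactly $2$. The vertices $s_0,s_1$ divide the boundary of the outer face of $G$ into two arcs $A_0,A_1$. The split-dual $G^*_s$ is obtained from the dual graph $G^*$ by splitting the vertex corresponding to the outer face into two vertices $o^*_0,o^*_1$, where $o^*_i$ keeps the incidences with the dual edges of the edges of $A_i$. A $2^*$-orientation of $G^*_s$ is an orientation in which $o^*_0$ and $o^*_1$ have outdegree $1$ and every other vertex has outdegree $2$. *)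

theory Defs
  imports Main "HOL-Library.FuncSet"
begin

text \<open>
  Plane graphs are represented as connected combinatorial maps of genus 0:
  a finite set D of darts (half-edges), a fixed-point-free involution alpha on D
  (the two darts of an edge), and a permutation sigma of D (the rotation: the cyclic
  order of darts around their common vertex).
  An angle (corner) is identified with a dart d: it is the corner at the vertex of d
  between d and sigma d.  This corner lies in the face (phi-orbit) of d, and the
  next corner along that face is phi d.
  The side of an edge traversed along dart d (from the vertex of d to the vertex of
  alpha d) is identified with the dart d; it borders the face containing alpha d,
  and the next side along that face is (sigma o alpha) d.
\<close>

definition orb :: "('a \<Rightarrow> 'a) \<Rightarrow> 'a \<Rightarrow> 'a set" where
  "orb f x = {(f ^^ n) x | n. True}"

definition verts :: "'a set \<Rightarrow> ('a \<Rightarrow> 'a) \<Rightarrow> 'a set set" where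
  "verts D \<sigma> = orb \<sigma> ` D"

definition edges :: "'a set \<Rightarrow> ('a \<Rightarrow> 'a) \<Rightarrow> 'a set set" where
  "edges D \<alpha> = (\<lambda>d. {d, \<alpha> d}) ` D"

definition faces :: "'a set \<Rightarrow> ('a \<Rightarrow> 'a) \<Rightarrow> ('a \<Rightarrow> 'a) \<Rightarrow> 'a set set" where
  "faces D \<alpha> \<sigma> = orb (\<alpha> \<circ> \<sigma>) ` D"

definition plane_map :: "'a set \<Rightarrow> ('a \<Rightarrow> 'a) \<Rightarrow> ('a \<Rightarrow> 'a) \<Rightarrow> bool" where
  "plane_map D \<alpha> \<sigma> \<longleftrightarrow>
     finite D \<and> D \<noteq> {} \<and>
     (\<forall>d\<in>D. \<alpha> d \<in> D \<and> \<alpha> d \<noteq> d \<and> \<alpha> (\<alpha> d) = d) \<and>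
     bij_betw \<sigma> D D \<and>
     (\<forall>d\<in>D. \<alpha> d \<notin> orb \<sigma> d) \<and>
     (\<forall>d\<in>D. \<forall>e\<in>D. (d, e) \<in> ({(x, \<sigma> x) | x. x \<in> D} \<union> {(x, \<alpha> x) | x. x \<in> D})\<^sup>*) \<and>
     int (card (verts D \<sigma>)) - int (card (edges D \<alpha>)) + int (card (faces D \<alpha> \<sigma>)) = 2"

text \<open>Weak labelings (conditions G0--G3).  Labels around a vertex (resp. face) form
  one non-empty cyclic interval of 1s and one of 0s iff exactly two consecutive
  pairs of angles carry different labels.\<close>
definition weak_labeling ::
  "'a set \<Rightarrow> ('a \<Rightarrow> 'a) \<Rightarrow> ('a \<Rightarrow> 'a) \<Rightarrow> 'a set \<Rightarrow> 'a set \<Rightarrow> ('a \<Rightarrow> nat) \<Rightarrow> bool" where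
  "weak_labeling D \<alpha> \<sigma> s0 s1 l \<longleftrightarrow>
     l \<in> D \<rightarrow>\<^sub>E {0, 1} \<and>
     (\<forall>d\<in>s0. l d = 0) \<and> (\<forall>d\<in>s1. l d = 1) \<and>
     (\<forall>v\<in>verts D \<sigma> - {s0, s1}. card {d\<in>v. l d \<noteq> l (\<sigma> d)} = 2) \<and>
     (\<forall>d\<in>D. (l d = l (inv_into D \<sigma> d)) \<noteq> (l (\<alpha> d) = l (inv_into D \<sigma> (\<alpha> d)))) \<and>
     (\<forall>f\<in>faces D \<alpha> \<sigma>. card {d\<in>f. l d \<noteq> l ((\<alpha> \<circ> \<sigma>) d)} = 2)"

definition weak_labelings ::
  "'a set \<Rightarrow> ('a \<Rightarrow> 'a) \<Rightarrow> ('a \<Rightarrow> 'a) \<Rightarrow> 'a set \<Rightarrow> 'a set \<Rightarrow> ('a \<Rightarrow> nat) set" where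
  "weak_labelings D \<alpha> \<sigma> s0 s1 = {l. weak_labeling D \<alpha> \<sigma> s0 s1 l}"

text \<open>An orientation of G is encoded by the set X of darts pointing away from their
  vertex (exactly one dart of each edge).\<close>
definition two_orientations ::
  "'a set \<Rightarrow> ('a \<Rightarrow> 'a) \<Rightarrow> ('a \<Rightarrow> 'a) \<Rightarrow> 'a set \<Rightarrow> 'a set \<Rightarrow> 'a set set" where
  "two_orientations D \<alpha> \<sigma> s0 s1 =
     {X. X \<subseteq> D \<and> (\<forall>d\<in>D. (d \<in> X) \<noteq> (\<alpha> d \<in> X)) \<and>
         (\<forall>v\<in>verts D \<sigma> - {s0, s1}. card (v \<inter> X) = 2)}"

text \<open>Arcs of the outer face: the side d (of the outer face) belongs to arc A_1
  (in_arc ... True d) iff, walking backwards along the outer face boundary from d,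
  the last special vertex met is s1; otherwise it belongs to A_0.\<close>
definition in_arc ::
  "'a set \<Rightarrow> ('a \<Rightarrow> 'a) \<Rightarrow> ('a \<Rightarrow> 'a) \<Rightarrow> 'a set \<Rightarrow> 'a set \<Rightarrow> bool \<Rightarrow> 'a \<Rightarrow> bool" where
  "in_arc D \<alpha> \<sigma> s0 s1 i d \<longleftrightarrow>
     (\<exists>e n. e \<in> D \<and> orb \<sigma> e = (if i then s1 else s0) \<and> ((\<sigma> \<circ> \<alpha>) ^^ n) e = d \<and>
        (\<forall>m. 0 < m \<and> m \<le> n \<longrightarrow> orb \<sigma> (((\<sigma> \<circ> \<alpha>) ^^ m) e) \<notin> {s0, s1}))"

datatype 'a dvert = DFace "'a set" | DOut bool

text \<open>Vertex of the split dual at the end of the dual edge corresponding to side d.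
  DOut False is o*_0 and DOut True is o*_1.\<close>
definition dend ::
  "'a set \<Rightarrow> ('a \<Rightarrow> 'a) \<Rightarrow> ('a \<Rightarrow> 'a) \<Rightarrow> 'a set \<Rightarrow> 'a set \<Rightarrow> 'a set \<Rightarrow> 'a \<Rightarrow> 'a dvert" where
  "dend D \<alpha> \<sigma> out s0 s1 d =
     (if orb (\<alpha> \<circ> \<sigma>) (\<alpha> d) = out then DOut (in_arc D \<alpha> \<sigma> s0 s1 True d)
      else DFace (orb (\<alpha> \<circ> \<sigma>) (\<alpha> d)))"

definition split_dual_verts ::
  "'a set \<Rightarrow> ('a \<Rightarrow> 'a) \<Rightarrow> ('a \<Rightarrow> 'a) \<Rightarrow> 'a set \<Rightarrow> 'a dvert set" where
  "split_dual_verts D \<alpha> \<sigma> out = DFace ` (faces D \<alpha> \<sigma> - {out}) \<union> {DOut False, DOut True}"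

text \<open>An orientation of the split dual is encoded by the set Y of sides d such that
  the dual edge of {d, alpha d} is directed away from its end dend d.\<close>
definition two_star_orientations ::
  "'a set \<Rightarrow> ('a \<Rightarrow> 'a) \<Rightarrow> ('a \<Rightarrow> 'a) \<Rightarrow> 'a set \<Rightarrow> 'a set \<Rightarrow> 'a set \<Rightarrow> 'a set set" where
  "two_star_orientations D \<alpha> \<sigma> out s0 s1 =
     {Y. Y \<subseteq> D \<and> (\<forall>d\<in>D. (d \<in> Y) \<noteq> (\<alpha> d \<in> Y)) \<and>
         (\<forall>x\<in>split_dual_verts D \<alpha> \<sigma> out.
            card {d\<in>Y. dend D \<alpha> \<sigma> out s0 s1 d = x} = (case x of DOut _ \<Rightarrow> 1 | DFace _ \<Rightarrow> 2))}"

end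

theory Submission
  imports Defs "HOL-Combinatorics.Orbits"
begin

text \<open>Identify a labeling with the set L of angles labelled 1, and call a dart (a side) outgoing
  when the two angles flanking it carry different labels.  Then (G1)--(G3) say exactly that the
  outgoing darts form a 2-orientation X of G and the outgoing sides a 2*-orientation X* of the
  split dual; the arcs A_0, A_1 enter because along the outer face the labels pass from 0 at s_0
  to 1 at s_1 exactly once in each arc.

  Conversely, (X, X*) prescribes where the labels change.  Regard the angles as the vertices of a
  cell complex on the sphere whose 2-cells are the vertices, faces and edges of G.  The degree
  conditions make the prescription a Z/2-cocycle, and since the sphere has no first cohomology
  (a rank count using Euler's formula) it is the coboundary of a set L of angles, unique up to
  complement.  Counting edges twice shows that s_0 and s_1 have no outgoing darts, so
  L is constant on each of them, and outdegree 1 at o*_0 and o*_1 forces the values 0 and 1.\<close>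

section \<open>Counting modulo 2\<close>

lemma odd_card_sym_diff:
  assumes "finite A" "finite B"
  shows "odd (card (sym_diff A B)) \<longleftrightarrow> odd (card A) \<noteq> odd (card B)"
proof -
  have "sym_diff A B = (A \<union> B) - (A \<inter> B)" by blast
  then have "card (sym_diff A B) = card (A \<union> B) - card (A \<inter> B)"
    using assms card_Diff_subset[of "A \<inter> B" "A \<union> B"] by auto
  moreover have "card (A \<inter> B) \<le> card (A \<union> B)"
    using assms by (intro card_mono) auto
  moreover have "card A + card B = card (A \<union> B) + card (A \<inter> B)"
    using assms by (rule card_Un_Int)
  ultimately show ?thesis by presburger
qed

lemma even_card_changes_along_bij:
  fixes P :: "'a \<Rightarrow> bool"
  assumes "finite V" "bij_betw g V V"
  shows "even (card {d \<in> V. P d \<noteq> P (g d)})"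
proof -
  have "bij_betw g {d \<in> V. P (g d)} {d \<in> V. P d}"
    using assms(2) by (auto simp: bij_betw_def inj_on_def)
  then have "card {d \<in> V. P (g d)} = card {d \<in> V. P d}"
    by (rule bij_betw_same_card)
  moreover have "{d \<in> V. P d \<noteq> P (g d)} = sym_diff {d \<in> V. P d} {d \<in> V. P (g d)}"
    by blast
  ultimately show ?thesis
    using odd_card_sym_diff[of "{d \<in> V. P d}" "{d \<in> V. P (g d)}"] assms(1) by auto
qed

lemma card_eq_sum_card_fibres:
  assumes "finite A" "finite P" "pairwise disjnt P" "g ` A \<subseteq> \<Union>P"
  shows "card A = (\<Sum>B\<in>P. card {a \<in> A. g a \<in> B})"
proof -
  have "A = (\<Union>B\<in>P. {a \<in> A. g a \<in> B})" using assms(4) by blast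
  then have "card A = card (\<Union>B\<in>P. {a \<in> A. g a \<in> B})" by simp
  also have "\<dots> = (\<Sum>B\<in>P. card {a \<in> A. g a \<in> B})"
    using assms(1-3) by (intro card_UN_disjoint) (auto simp: pairwise_def disjnt_def)
  finally show ?thesis .
qed

lemma card_even_subsets:
  assumes "finite C" "C \<noteq> {}"
  shows "card {T. T \<subseteq> C \<and> even (card T)} = 2 ^ (card C - 1)"
proof -
  have "card {T. T \<subseteq> C \<and> even (card T)} = card {T. T \<subseteq> C \<and> odd (card T)}"
    using card_subsupersets_even_odd[of C "{}"] assms by (simp add: psubset_eq)
  moreover have "card {T. T \<subseteq> C \<and> even (card T)} + card {T. T \<subseteq> C \<and> odd (card T)} = 2 ^ card C"
  proof -
    have fin: "finite {T. T \<subseteq> C \<and> P T}" for P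
      using assms(1) by (simp add: finite_subset[of _ "Pow C"])
    have "card (Pow C) = card ({T. T \<subseteq> C \<and> even (card T)} \<union> {T. T \<subseteq> C \<and> odd (card T)})"
      by (rule arg_cong[of _ _ card]) auto
    also have "\<dots> = card {T. T \<subseteq> C \<and> even (card T)} + card {T. T \<subseteq> C \<and> odd (card T)}"
      by (rule card_Un_disjoint[OF fin fin]) auto
    finally have "card (Pow C) = card {T. T \<subseteq> C \<and> even (card T)} + card {T. T \<subseteq> C \<and> odd (card T)}" .
    then show ?thesis using assms(1) by (simp add: card_Pow)
  qed
  moreover have "card C > 0" using assms by auto
  ultimately show ?thesis by (cases "card C") auto
qed

lemma card_Pow_eq_card_image_times_card_kernel:
  assumes "finite S"
    and hom: "\<And>x y. x \<subseteq> S \<Longrightarrow> y \<subseteq> S \<Longrightarrow> h (sym_diff x y) = sym_diff (h x) (h y)"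
  shows "card (Pow S) = card (h ` Pow S) * card {x \<in> Pow S. h x = {}}"
proof -
  let ?K = "{x \<in> Pow S. h x = {}}"
  have fibre: "card {x \<in> Pow S. h x = t} = card ?K" if t: "t \<in> h ` Pow S" for t
  proof -
    obtain x0 where x0: "x0 \<subseteq> S" "h x0 = t" using t by blast
    have "bij_betw (\<lambda>k. sym_diff k x0) ?K {x \<in> Pow S. h x = t}"
    proof (rule bij_betwI[where g = "\<lambda>k. sym_diff k x0"])
      have "h (sym_diff k x0) = sym_diff (h k) t" if "k \<subseteq> S" for k
        using hom[OF that x0(1)] x0(2) by simp
      then show "(\<lambda>k. sym_diff k x0) \<in> ?K \<rightarrow> {x \<in> Pow S. h x = t}"
        and "(\<lambda>k. sym_diff k x0) \<in> {x \<in> Pow S. h x = t} \<rightarrow> ?K"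
        using x0(1) by auto
    qed auto
    then show ?thesis by (simp add: bij_betw_same_card)
  qed
  have "Pow S = (\<Union>t \<in> h ` Pow S. {x \<in> Pow S. h x = t})" by blast
  then have "card (Pow S) = card (\<Union>t \<in> h ` Pow S. {x \<in> Pow S. h x = t})" by simp
  also have "\<dots> = (\<Sum>t \<in> h ` Pow S. card {x \<in> Pow S. h x = t})"
    by (rule card_UN_disjoint) (use assms(1) in auto)
  also have "\<dots> = (\<Sum>t \<in> h ` Pow S. card ?K)" by (intro sum.cong refl fibre)
  finally show ?thesis by simp
qed

lemma image_eq_kernel_if_card_le:
  assumes "finite S"
    and hom: "\<And>x y. x \<subseteq> S \<Longrightarrow> y \<subseteq> S \<Longrightarrow> h (sym_diff x y) = sym_diff (h x) (h y)"
    and sub: "g ` A \<subseteq> {x \<in> Pow S. h x = {}}"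
    and card_le: "card (Pow S) \<le> card (g ` A) * card (h ` Pow S)"
  shows "g ` A = {x \<in> Pow S. h x = {}}"
proof (rule card_seteq[OF _ sub])
  show "finite {x \<in> Pow S. h x = {}}" using assms(1) by simp
  have "card (h ` Pow S) * card {x \<in> Pow S. h x = {}} \<le> card (h ` Pow S) * card (g ` A)"
    using card_le card_Pow_eq_card_image_times_card_kernel[OF assms(1) hom] by (metis mult.commute)
  moreover have "card (h ` Pow S) > 0" using assms(1) by (auto simp: card_gt_0_iff)
  ultimately show "card {x \<in> Pow S. h x = {}} \<le> card (g ` A)" by simp
qed

lemma even_subset_in_sym_diff_closed:
  assumes M: "{} \<in> M" "\<And>A B. A \<in> M \<Longrightarrow> B \<in> M \<Longrightarrow> sym_diff A B \<in> M"
    and pairs: "\<And>a b. a \<in> C \<Longrightarrow> b \<in> C \<Longrightarrow> a \<noteq> b \<Longrightarrow> {a, b} \<in> M"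
    and T: "finite T" "T \<subseteq> C" "even (card T)"
  shows "T \<in> M"
  using T
proof (induction "card T" arbitrary: T rule: less_induct)
  case less
  show ?case
  proof (cases "T = {}")
    case True
    then show ?thesis using M(1) by simp
  next
    case False
    then obtain a where a: "a \<in> T" by auto
    have "T \<noteq> {a}" using less.prems(3) by auto
    then obtain b where b: "b \<in> T" "b \<noteq> a" using a by auto
    let ?T' = "T - {a, b}"
    have ab: "{a, b} \<subseteq> T" "card {a, b} = 2" using a b by auto
    then have "card ?T' = card T - 2" "card T \<ge> 2"
      using less.prems(1) card_Diff_subset[of "{a, b}" T] card_mono[of T "{a, b}"] by auto
    moreover have "finite ?T'" "?T' \<subseteq> C" using less.prems by auto
    ultimately have "?T' \<in> M" using less.hyps[of ?T'] less.prems(3) by auto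
    moreover have "{a, b} \<in> M" using pairs a b less.prems(2) by blast
    ultimately have "sym_diff ?T' {a, b} \<in> M" by (rule M(2))
    moreover have "sym_diff ?T' {a, b} = T" using ab(1) by blast
    ultimately show ?thesis by simp
  qed
qed

lemma sym_diff_doubleton_trans:
  assumes closed: "\<And>A B. A \<in> M \<Longrightarrow> B \<in> M \<Longrightarrow> sym_diff A B \<in> M"
    and "a = b \<or> {a, b} \<in> M" "b = c \<or> {b, c} \<in> M"
  shows "a = c \<or> {a, c} \<in> M"
proof (cases "a = b \<or> b = c \<or> a = c")
  case True
  then show ?thesis using assms(2,3) by auto
next
  case False
  then have "sym_diff {a, b} {b, c} = {a, c}" by auto
  then show ?thesis using closed assms(2,3) False by metis
qed

section \<open>Orbits of a bijection of a finite set\<close>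

locale bij_on_finite =
  fixes D :: "'a set" and f :: "'a \<Rightarrow> 'a"
  assumes finite_dom: "finite D" and bij: "bij_betw f D D"
begin

lemma f_in: "x \<in> D \<Longrightarrow> f x \<in> D"
  using bij by (auto simp: bij_betw_def)

lemma funpow_in: "x \<in> D \<Longrightarrow> (f ^^ n) x \<in> D"
  by (induction n) (auto simp: f_in)

lemma funpow_inj: "x \<in> D \<Longrightarrow> y \<in> D \<Longrightarrow> (f ^^ n) x = (f ^^ n) y \<Longrightarrow> x = y"
proof (induction n)
  case (Suc n)
  then show ?case using bij funpow_in by (auto simp: bij_betw_def inj_on_def)
qed simp

lemma self_in_orbit:
  assumes "x \<in> D"
  shows "x \<in> orbit f x"
proof -
  define g where "g y = (if y \<in> D then f y else y)" for y
  have "bij_betw g D D" using bij by (rule bij_betw_cong[THEN iffD1, rotated]) (simp add: g_def)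
  then have "g permutes D" by (rule bij_imp_permutes) (simp add: g_def)
  then have "x \<in> orbit g x" using finite_dom by (intro permutation_self_in_orbit permutes_imp_permutation)
  moreover have "orbit g x = orbit f x" using assms by (intro orbit_cong0[of x D]) (auto simp: g_def f_in)
  ultimately show ?thesis by simp
qed

lemma orb_eq_orbit: "x \<in> D \<Longrightarrow> orb f x = orbit f x"
  unfolding orb_def using orbit_altdef_self_in[OF self_in_orbit] by simp

lemma self_in_orb: "x \<in> orb f x"
  unfolding orb_def by (auto intro: exI[of _ 0])

lemma funpow_in_orb: "(f ^^ n) x \<in> orb f x"
  unfolding orb_def by blast

lemma f_in_orb:
  assumes "y \<in> orb f x"
  shows "f y \<in> orb f x"
proof -
  obtain n where "y = (f ^^ n) x" using assms unfolding orb_def by blast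
  then have "f y = (f ^^ Suc n) x" by simp
  then show ?thesis using funpow_in_orb by metis
qed

lemma orb_subset: "x \<in> D \<Longrightarrow> orb f x \<subseteq> D"
  unfolding orb_def using funpow_in by auto

lemma finite_orb: "x \<in> D \<Longrightarrow> finite (orb f x)"
  using orb_subset finite_dom finite_subset by blast

lemma orb_eq:
  assumes "x \<in> D" "y \<in> orb f x"
  shows "orb f y = orb f x"
proof -
  have y: "y \<in> D" "y \<in> orbit f x" using assms orb_subset orb_eq_orbit by auto
  then have "x \<in> orbit f y" using orbit_swap[OF self_in_orbit[OF assms(1)]] by blast
  then have "orbit f y = orbit f x"
    using orbit_trans[OF _ y(2)] orbit_trans[OF _ \<open>x \<in> orbit f y\<close>] by blast
  then show ?thesis using assms(1) y(1) orb_eq_orbit by simp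
qed

lemma orb_f: "x \<in> D \<Longrightarrow> orb f (f x) = orb f x"
  using orb_eq f_in_orb self_in_orb by blast

lemma f_in_orb_iff: "x \<in> D \<Longrightarrow> y \<in> D \<Longrightarrow> f y \<in> orb f x \<longleftrightarrow> y \<in> orb f x"
  using f_in_orb orb_eq orb_f self_in_orb f_in by metis

lemma bij_betw_orb:
  assumes "x \<in> D"
  shows "bij_betw f (orb f x) (orb f x)"
proof -
  have "inj_on f (orb f x)"
    using bij orb_subset[OF assms] by (auto simp: bij_betw_def intro: inj_on_subset)
  moreover have "f ` orb f x \<subseteq> orb f x" using f_in_orb by auto
  ultimately show ?thesis using finite_orb[OF assms] by (simp add: bij_betw_def endo_inj_surj)
qed

lemma inv_in: "x \<in> D \<Longrightarrow> inv_into D f x \<in> D"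
  using bij by (metis bij_betw_def inv_into_into)

lemma f_inv: "x \<in> D \<Longrightarrow> f (inv_into D f x) = x"
  using bij by (meson bij_betw_inv_into_right)

lemma inv_f: "x \<in> D \<Longrightarrow> inv_into D f (f x) = x"
  using bij by (meson bij_betw_inv_into_left)

lemma orb_inv:
  assumes "x \<in> D"
  shows "orb f (inv_into D f x) = orb f x"
  using orb_f[OF inv_in[OF assms]] f_inv[OF assms] by simp

lemma inv_in_orb: "x \<in> D \<Longrightarrow> y \<in> orb f x \<Longrightarrow> inv_into D f y \<in> orb f x"
  using orb_inv orb_eq orb_subset self_in_orb by (metis subsetD)

lemma orb_eq_image_period:
  "x \<in> D \<Longrightarrow> orb f x = (\<lambda>n. (f ^^ n) x) ` {..<funpow_dist1 f x x}"
  using orbit_conv_funpow_dist1[OF self_in_orbit] orb_eq_orbit by (simp add: atLeast0LessThan)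

lemma inj_on_period: "x \<in> D \<Longrightarrow> inj_on (\<lambda>n. (f ^^ n) x) {..<funpow_dist1 f x x}"
  using inj_on_funpow_dist1[OF self_in_orbit] by (simp add: atLeast0LessThan)

end

section \<open>Plane maps\<close>

locale plane_graph =
  fixes D :: "'a set" and \<alpha> \<sigma> :: "'a \<Rightarrow> 'a"
  assumes plane: "plane_map D \<alpha> \<sigma>"
begin

lemma finite_darts: "finite D"
  and darts_nonempty: "D \<noteq> {}"
  and \<alpha>_in: "d \<in> D \<Longrightarrow> \<alpha> d \<in> D"
  and \<alpha>_neq: "d \<in> D \<Longrightarrow> \<alpha> d \<noteq> d"
  and \<alpha>_\<alpha>: "d \<in> D \<Longrightarrow> \<alpha> (\<alpha> d) = d"
  and bij_\<sigma>: "bij_betw \<sigma> D D"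
  and connected: "d \<in> D \<Longrightarrow> e \<in> D \<Longrightarrow>
         (d, e) \<in> ({(x, \<sigma> x) | x. x \<in> D} \<union> {(x, \<alpha> x) | x. x \<in> D})\<^sup>*"
  and euler: "int (card (verts D \<sigma>)) - int (card (edges D \<alpha>)) + int (card (faces D \<alpha> \<sigma>)) = 2"
  using plane unfolding plane_map_def by auto

lemma bij_\<alpha>: "bij_betw \<alpha> D D"
  by (rule bij_betwI[where g = \<alpha>]) (auto simp: \<alpha>_in \<alpha>_\<alpha>)

abbreviation \<phi> where "\<phi> \<equiv> \<alpha> \<circ> \<sigma>"
abbreviation \<psi> where "\<psi> \<equiv> \<sigma> \<circ> \<alpha>"
abbreviation \<sigma>inv where "\<sigma>inv \<equiv> inv_into D \<sigma>"

sublocale rotation: bij_on_finite D \<sigma>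
  using finite_darts bij_\<sigma> by unfold_locales
sublocale face_perm: bij_on_finite D \<phi>
  using finite_darts bij_betw_trans[OF bij_\<sigma> bij_\<alpha>] by unfold_locales
sublocale side_perm: bij_on_finite D \<psi>
  using finite_darts bij_betw_trans[OF bij_\<alpha> bij_\<sigma>] by unfold_locales

lemma \<alpha>_funpow_\<psi>: "d \<in> D \<Longrightarrow> \<alpha> ((\<psi> ^^ n) d) = (\<phi> ^^ n) (\<alpha> d)"
proof (induction n)
  case (Suc n)
  then show ?case using \<alpha>_\<alpha> side_perm.funpow_in by simp
qed simp

lemma finite_verts: "finite (verts D \<sigma>)"
  and finite_faces: "finite (faces D \<alpha> \<sigma>)"
  and finite_edges: "finite (edges D \<alpha>)"
  unfolding verts_def faces_def edges_def using finite_darts by simp_all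

lemma vert_eq_orb: "v \<in> verts D \<sigma> \<Longrightarrow> d \<in> v \<Longrightarrow> v = orb \<sigma> d"
  unfolding verts_def using rotation.orb_eq by auto

lemma face_eq_orb: "f \<in> faces D \<alpha> \<sigma> \<Longrightarrow> d \<in> f \<Longrightarrow> f = orb \<phi> d"
  unfolding faces_def using face_perm.orb_eq by auto

lemma vert_subset: "v \<in> verts D \<sigma> \<Longrightarrow> v \<subseteq> D"
  unfolding verts_def using rotation.orb_subset by auto

lemma face_subset: "f \<in> faces D \<alpha> \<sigma> \<Longrightarrow> f \<subseteq> D"
  unfolding faces_def using face_perm.orb_subset by auto

lemma vert_nonempty: "v \<in> verts D \<sigma> \<Longrightarrow> v \<noteq> {}"
  unfolding verts_def using rotation.self_in_orb by auto

lemma Union_verts: "\<Union>(verts D \<sigma>) = D"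
  unfolding verts_def using rotation.orb_subset rotation.self_in_orb by blast

lemma Union_faces: "\<Union>(faces D \<alpha> \<sigma>) = D"
  unfolding faces_def using face_perm.orb_subset face_perm.self_in_orb by blast

lemma disjoint_verts: "pairwise disjnt (verts D \<sigma>)"
  unfolding pairwise_def disjnt_def verts_def using rotation.orb_eq by blast

lemma disjoint_faces: "pairwise disjnt (faces D \<alpha> \<sigma>)"
  unfolding pairwise_def disjnt_def faces_def using face_perm.orb_eq by blast

lemma disjoint_edges: "pairwise disjnt (edges D \<alpha>)"
  unfolding pairwise_def disjnt_def edges_def by (auto simp: \<alpha>_\<alpha>) (metis \<alpha>_\<alpha>)+

lemma mem_edge_iff: "e \<in> edges D \<alpha> \<Longrightarrow> d \<in> D \<Longrightarrow> d \<in> e \<longleftrightarrow> e = {d, \<alpha> d}"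
  unfolding edges_def using \<alpha>_\<alpha> by auto

lemma card_darts: "card D = 2 * card (edges D \<alpha>)"
proof -
  have "card D = (\<Sum>e \<in> edges D \<alpha>. card {d \<in> D. d \<in> e})"
    using finite_darts finite_edges disjoint_edges
    by (rule card_eq_sum_card_fibres) (auto simp: edges_def)
  also have "\<dots> = (\<Sum>e \<in> edges D \<alpha>. 2)"
  proof (rule sum.cong)
    fix e assume "e \<in> edges D \<alpha>"
    then obtain d where "d \<in> D" "e = {d, \<alpha> d}" unfolding edges_def by auto
    then have "{d' \<in> D. d' \<in> e} = {d, \<alpha> d}" "\<alpha> d \<noteq> d" using \<alpha>_in \<alpha>_neq by auto
    then show "card {d' \<in> D. d' \<in> e} = 2" by simp
  qed simp
  finally show ?thesis by simp
qed

lemma euler_nat: "card (verts D \<sigma>) + card (faces D \<alpha> \<sigma>) = card (edges D \<alpha>) + 2"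
  using euler by linarith

lemma closed_subset_eq_darts:
  assumes "L \<subseteq> D" "x \<in> L" "\<And>d. d \<in> L \<Longrightarrow> \<sigma> d \<in> L" "\<And>d. d \<in> L \<Longrightarrow> \<alpha> d \<in> L"
  shows "L = D"
proof
  show "D \<subseteq> L"
  proof
    fix e assume "e \<in> D"
    then have "(x, e) \<in> ({(x, \<sigma> x) | x. x \<in> D} \<union> {(x, \<alpha> x) | x. x \<in> D})\<^sup>*"
      using connected assms(1,2) by blast
    then show "e \<in> L"
      by (induction rule: rtrancl_induct) (use assms in auto)
  qed
qed (fact assms(1))

lemma card_eq_card_edges:
  assumes "A \<subseteq> D" "\<And>d. d \<in> D \<Longrightarrow> (d \<in> A) \<noteq> (\<alpha> d \<in> A)"
  shows "card A = card (edges D \<alpha>)"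
proof -
  have "bij_betw (\<lambda>d. {d, \<alpha> d}) A (edges D \<alpha>)"
  proof (rule bij_betw_imageI)
    show "inj_on (\<lambda>d. {d, \<alpha> d}) A"
      using assms by (auto simp: inj_on_def doubleton_eq_iff)
    show "(\<lambda>d. {d, \<alpha> d}) ` A = edges D \<alpha>"
      unfolding edges_def using assms by (auto simp: image_iff) (metis \<alpha>_\<alpha> \<alpha>_in insert_commute)
  qed
  then show ?thesis by (rule bij_betw_same_card)
qed

text \<open>At its vertex, dart d is flanked by the angles \<sigma>inv d and d; in its face, side d is
  flanked by the angles \<sigma>inv d and \<alpha> d = \<phi> (\<sigma>inv d).\<close>

definition orientation_of :: "'a set \<Rightarrow> 'a set" where
  "orientation_of L = {d \<in> D. (d \<in> L) \<noteq> (\<sigma>inv d \<in> L)}"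

definition dual_orientation_of :: "'a set \<Rightarrow> 'a set" where
  "dual_orientation_of L = {d \<in> D. (\<sigma>inv d \<in> L) \<noteq> (\<alpha> d \<in> L)}"

lemma orientation_of_subset: "orientation_of L \<subseteq> D"
  and dual_orientation_of_subset: "dual_orientation_of L \<subseteq> D"
  unfolding orientation_of_def dual_orientation_of_def by auto

lemma orientation_of_compl: "orientation_of (D - L) = orientation_of L"
  and dual_orientation_of_compl: "dual_orientation_of (D - L) = dual_orientation_of L"
  unfolding orientation_of_def dual_orientation_of_def using rotation.inv_in \<alpha>_in by auto

lemma antipodal_orientation_iff:
  assumes "d \<in> D"
  shows "((d \<in> orientation_of L) \<noteq> (\<alpha> d \<in> orientation_of L)) \<longleftrightarrow>
         ((d \<in> dual_orientation_of L) \<noteq> (\<alpha> d \<in> dual_orientation_of L))"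
  using assms \<alpha>_in \<alpha>_\<alpha> unfolding orientation_of_def dual_orientation_of_def by auto

lemma card_vert_orientation_of:
  assumes "x \<in> D"
  shows "card (orb \<sigma> x \<inter> orientation_of L) = card {c \<in> orb \<sigma> x. (c \<in> L) \<noteq> (\<sigma> c \<in> L)}"
proof -
  let ?v = "orb \<sigma> x"
  have v: "?v \<subseteq> D" using rotation.orb_subset[OF assms] .
  have "?v \<inter> orientation_of L = \<sigma> ` {c \<in> ?v. (c \<in> L) \<noteq> (\<sigma> c \<in> L)}"
  proof (intro equalityI subsetI)
    fix d assume d: "d \<in> ?v \<inter> orientation_of L"
    then have "\<sigma>inv d \<in> ?v" "\<sigma> (\<sigma>inv d) = d"
      using rotation.inv_in_orb rotation.f_inv assms v by auto
    then show "d \<in> \<sigma> ` {c \<in> ?v. (c \<in> L) \<noteq> (\<sigma> c \<in> L)}"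
      using d unfolding orientation_of_def by (auto intro!: image_eqI[of _ _ "\<sigma>inv d"])
  next
    fix d assume "d \<in> \<sigma> ` {c \<in> ?v. (c \<in> L) \<noteq> (\<sigma> c \<in> L)}"
    then show "d \<in> ?v \<inter> orientation_of L"
      using v rotation.f_in_orb rotation.f_in rotation.inv_f unfolding orientation_of_def by auto
  qed
  moreover have "inj_on \<sigma> ?v" using bij_\<sigma> v by (auto simp: bij_betw_def intro: inj_on_subset)
  ultimately show ?thesis by (simp add: card_image inj_on_subset)
qed

lemma card_face_dual_orientation_of:
  assumes "x \<in> D"
  shows "card {d \<in> dual_orientation_of L. \<alpha> d \<in> orb \<phi> x} = card {c \<in> orb \<phi> x. (c \<in> L) \<noteq> (\<phi> c \<in> L)}"
proof -
  let ?f = "orb \<phi> x"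
  have f: "?f \<subseteq> D" using face_perm.orb_subset[OF assms] .
  have "{d \<in> dual_orientation_of L. \<alpha> d \<in> ?f} = \<sigma> ` {c \<in> ?f. (c \<in> L) \<noteq> (\<phi> c \<in> L)}"
  proof (intro equalityI subsetI)
    fix d assume d: "d \<in> {d \<in> dual_orientation_of L. \<alpha> d \<in> ?f}"
    then have dD: "d \<in> D" unfolding dual_orientation_of_def by auto
    then have "\<phi> (\<sigma>inv d) = \<alpha> d" "\<sigma> (\<sigma>inv d) = d" using rotation.f_inv by auto
    moreover have "\<sigma>inv d \<in> ?f"
      using d dD rotation.inv_in face_perm.f_in_orb_iff[OF assms, of "\<sigma>inv d"] calculation by auto
    ultimately show "d \<in> \<sigma> ` {c \<in> ?f. (c \<in> L) \<noteq> (\<phi> c \<in> L)}"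
      using d unfolding dual_orientation_of_def by (auto intro!: image_eqI[of _ _ "\<sigma>inv d"])
  next
    fix d assume "d \<in> \<sigma> ` {c \<in> ?f. (c \<in> L) \<noteq> (\<phi> c \<in> L)}"
    then obtain c where "c \<in> ?f" "(c \<in> L) \<noteq> (\<phi> c \<in> L)" "d = \<sigma> c" by auto
    then show "d \<in> {d \<in> dual_orientation_of L. \<alpha> d \<in> ?f}"
      using f face_perm.f_in_orb rotation.f_in rotation.inv_f unfolding dual_orientation_of_def by auto
  qed
  moreover have "inj_on \<sigma> ?f" using bij_\<sigma> f by (auto simp: bij_betw_def intro: inj_on_subset)
  ultimately show ?thesis by (simp add: card_image inj_on_subset)
qed

definition ones :: "('a \<Rightarrow> nat) \<Rightarrow> 'a set" where
  "ones l = {d \<in> D. l d = 1}"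

lemma ones_subset: "ones l \<subseteq> D"
  unfolding ones_def by auto

lemma ones_inj:
  assumes "l \<in> D \<rightarrow>\<^sub>E {0, 1}" "l' \<in> D \<rightarrow>\<^sub>E {0, 1}" "ones l = ones l'"
  shows "l = l'"
proof (rule PiE_ext[OF assms(1,2)])
  fix d assume "d \<in> D"
  moreover have "l d \<in> {0, 1}" "l' d \<in> {0, 1}" using assms(1,2) calculation by auto
  moreover have "l d = 1 \<longleftrightarrow> l' d = 1" using assms(3) calculation(1) unfolding ones_def by blast
  ultimately show "l d = l' d" by auto
qed

lemma ones_restrict: "L \<subseteq> D \<Longrightarrow> ones (restrict (\<lambda>d. of_bool (d \<in> L)) D) = L"
  unfolding ones_def by auto

lemma label_neq_iff:
  assumes "l \<in> D \<rightarrow>\<^sub>E {0, 1}" "d \<in> D" "e \<in> D"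
  shows "l d \<noteq> l e \<longleftrightarrow> (d \<in> ones l) \<noteq> (e \<in> ones l)"
proof -
  have "l d \<in> {0, 1}" "l e \<in> {0, 1}" using assms by auto
  then show ?thesis using assms(2,3) unfolding ones_def by auto
qed

lemma card_vert_label_changes:
  assumes "l \<in> D \<rightarrow>\<^sub>E {0, 1}" "v \<in> verts D \<sigma>"
  shows "card {d \<in> v. l d \<noteq> l (\<sigma> d)} = card (v \<inter> orientation_of (ones l))"
proof -
  obtain x where x: "x \<in> D" "v = orb \<sigma> x" using assms(2) unfolding verts_def by auto
  have "l d \<noteq> l (\<sigma> d) \<longleftrightarrow> (d \<in> ones l) \<noteq> (\<sigma> d \<in> ones l)" if "d \<in> v" for d
    using label_neq_iff[OF assms(1)] vert_subset[OF assms(2)] rotation.f_in that by blast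
  then have "{d \<in> v. l d \<noteq> l (\<sigma> d)} = {d \<in> v. (d \<in> ones l) \<noteq> (\<sigma> d \<in> ones l)}" by auto
  then show ?thesis using card_vert_orientation_of[OF x(1)] x(2) by simp
qed

lemma card_face_label_changes:
  assumes "l \<in> D \<rightarrow>\<^sub>E {0, 1}" "f \<in> faces D \<alpha> \<sigma>"
  shows "card {d \<in> f. l d \<noteq> l (\<phi> d)} = card {d \<in> dual_orientation_of (ones l). \<alpha> d \<in> f}"
proof -
  obtain x where x: "x \<in> D" "f = orb \<phi> x" using assms(2) unfolding faces_def by auto
  have "l d \<noteq> l (\<phi> d) \<longleftrightarrow> (d \<in> ones l) \<noteq> (\<phi> d \<in> ones l)" if "d \<in> f" for d
    using label_neq_iff[OF assms(1)] face_subset[OF assms(2)] face_perm.f_in that by blast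
  then have "{d \<in> f. l d \<noteq> l (\<phi> d)} = {d \<in> f. (d \<in> ones l) \<noteq> (\<phi> d \<in> ones l)}" by auto
  then show ?thesis using card_face_dual_orientation_of[OF x(1)] x(2) by simp
qed

lemma edge_label_condition_iff:
  assumes "l \<in> D \<rightarrow>\<^sub>E {0, 1}" "d \<in> D"
  shows "(l d = l (\<sigma>inv d)) \<noteq> (l (\<alpha> d) = l (\<sigma>inv (\<alpha> d))) \<longleftrightarrow>
         (d \<in> orientation_of (ones l)) \<noteq> (\<alpha> d \<in> orientation_of (ones l))"
proof -
  have "\<alpha> d \<in> D" "\<sigma>inv d \<in> D" "\<sigma>inv (\<alpha> d) \<in> D" using assms(2) \<alpha>_in rotation.inv_in by auto
  then show ?thesis
    using label_neq_iff[OF assms(1)] assms(2) unfolding orientation_of_def by auto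
qed

lemma constant_on_vert:
  assumes "v \<in> verts D \<sigma>" "v \<inter> orientation_of L = {}"
  shows "v \<subseteq> L \<or> v \<inter> L = {}"
proof -
  obtain w where w: "w \<in> D" "v = orb \<sigma> w" using assms(1) unfolding verts_def by auto
  have "((\<sigma> ^^ n) w \<in> L) = (w \<in> L)" for n
  proof (induction n)
    case (Suc n)
    let ?y = "(\<sigma> ^^ n) w"
    have "?y \<in> D" "\<sigma> ?y \<in> v" using w rotation.funpow_in rotation.funpow_in_orb[of "Suc n" w] by auto
    then have "(\<sigma> ?y \<in> L) = (\<sigma>inv (\<sigma> ?y) \<in> L)"
      using assms(2) rotation.f_in unfolding orientation_of_def by auto
    then show ?case using rotation.inv_f \<open>?y \<in> D\<close> Suc by simp
  qed simp
  then show ?thesis using w(2) unfolding orb_def by auto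
qed

subsection \<open>The angle complex\<close>

text \<open>The steps (False, d) and (True, d) join the two angles flanking dart d resp. side d; the
  2-cells are the vertices, faces and edges of the graph.  Sets stand for Z/2-cochains, with
  symmetric difference as sum, and \<delta>0, \<delta>1 are the coboundary maps.\<close>

definition steps :: "(bool \<times> 'a) set" where
  "steps = UNIV \<times> D"

definition steps_of :: "'a set \<Rightarrow> 'a set \<Rightarrow> (bool \<times> 'a) set" where
  "steps_of X Y = Pair False ` X \<union> Pair True ` Y"

lemma finite_steps: "finite steps"
  unfolding steps_def using finite_darts by simp

lemma steps_of_subset: "X \<subseteq> D \<Longrightarrow> Y \<subseteq> D \<Longrightarrow> steps_of X Y \<subseteq> steps"
  unfolding steps_of_def steps_def by auto

lemma steps_of_inject:
  assumes "steps_of X Y = steps_of X' Y'"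
  shows "X = X'" "Y = Y'"
proof -
  have "(b, d) \<in> steps_of X Y \<longleftrightarrow> (if b then d \<in> Y else d \<in> X)" for b d X Y
    unfolding steps_of_def by auto
  then show "X = X'" "Y = Y'" using assms by (metis subsetI subset_antisym)+
qed

definition cells :: "('a set + 'a set + 'a set) set" where
  "cells = verts D \<sigma> <+> faces D \<alpha> \<sigma> <+> edges D \<alpha>"

definition cell_boundary :: "'a set + 'a set + 'a set \<Rightarrow> (bool \<times> 'a) set" where
  "cell_boundary c = (case c of
     Inl v \<Rightarrow> Pair False ` v
   | Inr (Inl f) \<Rightarrow> Pair True ` {d \<in> D. \<alpha> d \<in> f}
   | Inr (Inr e) \<Rightarrow> UNIV \<times> e)"

definition \<delta>\<^sub>1 :: "(bool \<times> 'a) set \<Rightarrow> ('a set + 'a set + 'a set) set" where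
  "\<delta>\<^sub>1 z = {c \<in> cells. odd (card (z \<inter> cell_boundary c))}"

definition \<delta>\<^sub>0 :: "'a set \<Rightarrow> (bool \<times> 'a) set" where
  "\<delta>\<^sub>0 L = steps_of (orientation_of L) (dual_orientation_of L)"

definition vertex_cell :: "'a \<Rightarrow> 'a set + 'a set + 'a set" where
  "vertex_cell d = Inl (orb \<sigma> d)"

definition face_cell :: "'a \<Rightarrow> 'a set + 'a set + 'a set" where
  "face_cell d = Inr (Inl (orb \<phi> (\<alpha> d)))"

definition edge_cell :: "'a \<Rightarrow> 'a set + 'a set + 'a set" where
  "edge_cell d = Inr (Inr {d, \<alpha> d})"

lemma cells_eq: "cells = vertex_cell ` D \<union> face_cell ` D \<union> edge_cell ` D"
proof -
  have "faces D \<alpha> \<sigma> = (\<lambda>d. orb \<phi> (\<alpha> d)) ` D"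
    unfolding faces_def using bij_\<alpha> by (metis bij_betw_imp_surj_on image_image)
  then show ?thesis
    unfolding cells_def Plus_def verts_def edges_def vertex_cell_def face_cell_def edge_cell_def
    by auto
qed

lemma finite_cells: "finite cells"
  unfolding cells_def using finite_verts finite_faces finite_edges by simp

lemma card_cells: "card cells = card D + 2"
  unfolding cells_def using finite_verts finite_faces finite_edges euler_nat card_darts
  by (simp add: card_Plus)

lemma cellsE:
  assumes "c \<in> cells"
  obtains (vertex) v where "v \<in> verts D \<sigma>" "c = Inl v"
    | (face) f where "f \<in> faces D \<alpha> \<sigma>" "c = Inr (Inl f)"
    | (edge) e where "e \<in> edges D \<alpha>" "c = Inr (Inr e)"
  using assms unfolding cells_def by blast

lemma dart_step_in_cell_boundary_iff:
  assumes "c \<in> cells" "d \<in> D"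
  shows "(False, d) \<in> cell_boundary c \<longleftrightarrow> c = vertex_cell d \<or> c = edge_cell d"
  using assms(1)
proof (cases rule: cellsE)
  case (vertex v)
  then have "d \<in> v \<longleftrightarrow> v = orb \<sigma> d" using vert_eq_orb rotation.self_in_orb by blast
  then show ?thesis using vertex by (auto simp: cell_boundary_def vertex_cell_def edge_cell_def)
next
  case (edge e)
  then have "d \<in> e \<longleftrightarrow> e = {d, \<alpha> d}" using mem_edge_iff assms(2) by blast
  then show ?thesis using edge by (auto simp: cell_boundary_def vertex_cell_def edge_cell_def)
qed (auto simp: cell_boundary_def vertex_cell_def edge_cell_def)

lemma side_step_in_cell_boundary_iff:
  assumes "c \<in> cells" "d \<in> D"
  shows "(True, d) \<in> cell_boundary c \<longleftrightarrow> c = face_cell d \<or> c = edge_cell d"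
  using assms(1)
proof (cases rule: cellsE)
  case (face f)
  then have "\<alpha> d \<in> f \<longleftrightarrow> f = orb \<phi> (\<alpha> d)" using face_eq_orb face_perm.self_in_orb by blast
  then show ?thesis using face assms(2) by (auto simp: cell_boundary_def face_cell_def edge_cell_def)
next
  case (edge e)
  then have "d \<in> e \<longleftrightarrow> e = {d, \<alpha> d}" using mem_edge_iff assms(2) by blast
  then show ?thesis using edge by (auto simp: cell_boundary_def face_cell_def edge_cell_def)
qed (auto simp: cell_boundary_def face_cell_def edge_cell_def)

lemma cells_in: "d \<in> D \<Longrightarrow> vertex_cell d \<in> cells \<and> face_cell d \<in> cells \<and> edge_cell d \<in> cells"
  unfolding cells_eq by blast

lemma \<delta>\<^sub>1_singleton: "\<delta>\<^sub>1 {s} = {c \<in> cells. s \<in> cell_boundary c}"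
  unfolding \<delta>\<^sub>1_def by (auto simp: Int_insert_left)

lemma \<delta>\<^sub>1_dart_step: "d \<in> D \<Longrightarrow> \<delta>\<^sub>1 {(False, d)} = {vertex_cell d, edge_cell d}"
  unfolding \<delta>\<^sub>1_singleton using dart_step_in_cell_boundary_iff cells_in by auto

lemma \<delta>\<^sub>1_side_step: "d \<in> D \<Longrightarrow> \<delta>\<^sub>1 {(True, d)} = {face_cell d, edge_cell d}"
  unfolding \<delta>\<^sub>1_singleton using side_step_in_cell_boundary_iff cells_in by auto

lemma \<delta>\<^sub>1_sym_diff:
  assumes "finite z" "finite w"
  shows "\<delta>\<^sub>1 (sym_diff z w) = sym_diff (\<delta>\<^sub>1 z) (\<delta>\<^sub>1 w)"
proof -
  have "sym_diff z w \<inter> B = sym_diff (z \<inter> B) (w \<inter> B)" for B by blast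
  then have "odd (card (sym_diff z w \<inter> B)) \<longleftrightarrow> odd (card (z \<inter> B)) \<noteq> odd (card (w \<inter> B))" for B
    using odd_card_sym_diff[of "z \<inter> B" "w \<inter> B"] assms by simp
  then show ?thesis unfolding \<delta>\<^sub>1_def by auto
qed

lemma sym_diff_in_image_\<delta>\<^sub>1:
  assumes "A \<in> \<delta>\<^sub>1 ` Pow steps" "B \<in> \<delta>\<^sub>1 ` Pow steps"
  shows "sym_diff A B \<in> \<delta>\<^sub>1 ` Pow steps"
proof -
  obtain z w where zw: "z \<subseteq> steps" "w \<subseteq> steps" "A = \<delta>\<^sub>1 z" "B = \<delta>\<^sub>1 w"
    using assms by blast
  then have "sym_diff A B = \<delta>\<^sub>1 (sym_diff z w)"
    using \<delta>\<^sub>1_sym_diff finite_steps finite_subset by metis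
  moreover have "sym_diff z w \<in> Pow steps" using zw by blast
  ultimately show ?thesis by blast
qed

lemma doubleton_in_image_\<delta>\<^sub>1:
  assumes "c \<in> cells" "c' \<in> cells" "c \<noteq> c'"
  shows "{c, c'} \<in> \<delta>\<^sub>1 ` Pow steps"
proof -
  define linked where "linked a b \<longleftrightarrow> a = b \<or> {a, b} \<in> \<delta>\<^sub>1 ` Pow steps" for a b
  have trans: "linked a b \<Longrightarrow> linked b c \<Longrightarrow> linked a c" for a b c
    unfolding linked_def by (rule sym_diff_doubleton_trans[OF sym_diff_in_image_\<delta>\<^sub>1])
  have sym: "linked a b \<Longrightarrow> linked b a" for a b
    unfolding linked_def by (auto simp: insert_commute)
  have vertex: "linked (edge_cell d) (vertex_cell d)" and face: "linked (edge_cell d) (face_cell d)"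
    if "d \<in> D" for d
  proof -
    have "{(False, d)} \<in> Pow steps" "{(True, d)} \<in> Pow steps" using that unfolding steps_def by auto
    then show "linked (edge_cell d) (vertex_cell d)" "linked (edge_cell d) (face_cell d)"
      using \<delta>\<^sub>1_dart_step[OF that] \<delta>\<^sub>1_side_step[OF that] unfolding linked_def
      by (metis image_eqI insert_commute)+
  qed
  obtain d0 where d0: "d0 \<in> D" using darts_nonempty by blast
  have "{d \<in> D. linked (edge_cell d0) (edge_cell d)} = D"
  proof (rule closed_subset_eq_darts)
    show "d0 \<in> {d \<in> D. linked (edge_cell d0) (edge_cell d)}" using d0 unfolding linked_def by simp
  next
    fix d assume d: "d \<in> {d \<in> D. linked (edge_cell d0) (edge_cell d)}"
    then have dD: "d \<in> D" "\<sigma> d \<in> D" using rotation.f_in by auto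
    have "vertex_cell (\<sigma> d) = vertex_cell d" unfolding vertex_cell_def using dD rotation.orb_f by simp
    then have "linked (edge_cell d) (vertex_cell (\<sigma> d))" using vertex[OF dD(1)] by simp
    then have "linked (edge_cell d) (edge_cell (\<sigma> d))" using trans sym[OF vertex[OF dD(2)]] by blast
    then show "\<sigma> d \<in> {d \<in> D. linked (edge_cell d0) (edge_cell d)}"
      using d rotation.f_in trans by blast
    have "edge_cell (\<alpha> d) = edge_cell d" unfolding edge_cell_def using d \<alpha>_\<alpha> by auto
    then show "\<alpha> d \<in> {d \<in> D. linked (edge_cell d0) (edge_cell d)}" using d \<alpha>_in by auto
  qed auto
  then have all: "linked (edge_cell d0) c" if "c \<in> cells" for c
    using that trans[OF _ vertex] trans[OF _ face] unfolding cells_eq by blast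
  have "linked c c'" using trans[OF sym[OF all] all] assms(1,2) .
  then show ?thesis using assms(3) unfolding linked_def by simp
qed

lemma card_image_\<delta>\<^sub>1: "2 ^ (card D + 1) \<le> card (\<delta>\<^sub>1 ` Pow steps)"
proof -
  have "{} \<in> \<delta>\<^sub>1 ` Pow steps" by (auto simp: \<delta>\<^sub>1_def intro!: image_eqI[of _ _ "{}"])
  then have "{T. T \<subseteq> cells \<and> even (card T)} \<subseteq> \<delta>\<^sub>1 ` Pow steps"
    using even_subset_in_sym_diff_closed[OF _ sym_diff_in_image_\<delta>\<^sub>1 doubleton_in_image_\<delta>\<^sub>1]
      finite_cells finite_subset by blast
  then have "card {T. T \<subseteq> cells \<and> even (card T)} \<le> card (\<delta>\<^sub>1 ` Pow steps)"
    using finite_steps by (intro card_mono) auto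
  moreover have "card {T. T \<subseteq> cells \<and> even (card T)} = 2 ^ (card D + 1)"
    using card_even_subsets[OF finite_cells] card_cells by force
  ultimately show ?thesis by simp
qed

lemma mem_\<delta>\<^sub>0:
  "(b, d) \<in> \<delta>\<^sub>0 L \<longleftrightarrow>
     d \<in> D \<and> (if b then (\<sigma>inv d \<in> L) \<noteq> (\<alpha> d \<in> L) else (d \<in> L) \<noteq> (\<sigma>inv d \<in> L))"
  unfolding \<delta>\<^sub>0_def steps_of_def orientation_of_def dual_orientation_of_def by (cases b) auto

lemma \<delta>\<^sub>0_sym_diff: "\<delta>\<^sub>0 (sym_diff L M) = sym_diff (\<delta>\<^sub>0 L) (\<delta>\<^sub>0 M)"
proof (rule set_eqI)
  fix s :: "bool \<times> 'a"
  show "s \<in> \<delta>\<^sub>0 (sym_diff L M) \<longleftrightarrow> s \<in> sym_diff (\<delta>\<^sub>0 L) (\<delta>\<^sub>0 M)"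
    by (cases s) (auto simp: mem_\<delta>\<^sub>0)
qed

lemma \<delta>\<^sub>0_eq_empty:
  assumes "L \<subseteq> D" "\<delta>\<^sub>0 L = {}"
  shows "L = {} \<or> L = D"
proof (cases "L = {}")
  case False
  have dart: "(d \<in> L) = (\<sigma>inv d \<in> L)" and side: "(\<sigma>inv d \<in> L) = (\<alpha> d \<in> L)" if "d \<in> D" for d
    using assms(2) mem_\<delta>\<^sub>0[of False d L] mem_\<delta>\<^sub>0[of True d L] that by auto
  from False obtain x where "x \<in> L" by blast
  then have "L = D"
  proof (rule closed_subset_eq_darts[OF assms(1)])
    fix d assume "d \<in> L"
    then show "\<sigma> d \<in> L" using dart[of "\<sigma> d"] assms(1) rotation.f_in rotation.inv_f by auto
  next
    fix d assume "d \<in> L"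
    then show "\<alpha> d \<in> L" using dart side assms(1) by blast
  qed
  then show ?thesis by simp
qed simp

lemma card_image_\<delta>\<^sub>0: "card (\<delta>\<^sub>0 ` Pow D) = 2 ^ (card D - 1)"
proof -
  have "\<delta>\<^sub>0 {} = {}" "\<delta>\<^sub>0 D = {}"
    using rotation.inv_in \<alpha>_in
    by (auto simp: \<delta>\<^sub>0_def steps_of_def orientation_of_def dual_orientation_of_def)
  then have "{L \<in> Pow D. \<delta>\<^sub>0 L = {}} = {{}, D}" using \<delta>\<^sub>0_eq_empty by auto
  moreover have "card (Pow D) = card (\<delta>\<^sub>0 ` Pow D) * card {L \<in> Pow D. \<delta>\<^sub>0 L = {}}"
    using finite_darts \<delta>\<^sub>0_sym_diff by (rule card_Pow_eq_card_image_times_card_kernel)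
  ultimately have "2 ^ card D = card (\<delta>\<^sub>0 ` Pow D) * 2"
    using finite_darts darts_nonempty by (simp add: card_Pow)
  moreover have "card D > 0" using finite_darts darts_nonempty by (simp add: card_gt_0_iff)
  ultimately show ?thesis by (cases "card D") auto
qed

lemma card_steps_of_cell_boundary:
  assumes "X \<subseteq> D" "Y \<subseteq> D"
  shows "v \<in> verts D \<sigma> \<Longrightarrow> card (steps_of X Y \<inter> cell_boundary (Inl v)) = card (v \<inter> X)"
    and "f \<in> faces D \<alpha> \<sigma> \<Longrightarrow>
           card (steps_of X Y \<inter> cell_boundary (Inr (Inl f))) = card {d \<in> Y. \<alpha> d \<in> f}"
    and "d \<in> D \<Longrightarrow> card (steps_of X Y \<inter> cell_boundary (edge_cell d)) =
           of_bool (d \<in> X) + of_bool (\<alpha> d \<in> X) + of_bool (d \<in> Y) + of_bool (\<alpha> d \<in> Y)"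
proof -
  have "steps_of X Y \<inter> cell_boundary (Inl v) = Pair False ` (v \<inter> X)"
    unfolding steps_of_def cell_boundary_def by auto
  then show "card (steps_of X Y \<inter> cell_boundary (Inl v)) = card (v \<inter> X)"
    by (simp add: card_image inj_on_def)
  have "steps_of X Y \<inter> cell_boundary (Inr (Inl f)) = Pair True ` {d \<in> Y. \<alpha> d \<in> f}"
    unfolding steps_of_def cell_boundary_def using assms(2) by auto
  then show "card (steps_of X Y \<inter> cell_boundary (Inr (Inl f))) = card {d \<in> Y. \<alpha> d \<in> f}"
    by (simp add: card_image inj_on_def)
  assume d: "d \<in> D"
  have "UNIV \<times> {d, \<alpha> d} = {(False, d), (False, \<alpha> d), (True, d), (True, \<alpha> d)}"
    using UNIV_bool by auto
  then show "card (steps_of X Y \<inter> cell_boundary (edge_cell d)) =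
      of_bool (d \<in> X) + of_bool (\<alpha> d \<in> X) + of_bool (d \<in> Y) + of_bool (\<alpha> d \<in> Y)"
    using \<alpha>_neq[OF d]
    by (simp add: cell_boundary_def edge_cell_def steps_of_def card_insert_if Int_insert_right image_iff)
qed

lemma \<delta>\<^sub>1_steps_of_eq_empty:
  assumes "X \<subseteq> D" "Y \<subseteq> D"
    and vertex_even: "\<And>v. v \<in> verts D \<sigma> \<Longrightarrow> even (card (v \<inter> X))"
    and face_even: "\<And>f. f \<in> faces D \<alpha> \<sigma> \<Longrightarrow> even (card {d \<in> Y. \<alpha> d \<in> f})"
    and edge_even: "\<And>d. d \<in> D \<Longrightarrow> ((d \<in> X) \<noteq> (\<alpha> d \<in> X)) \<longleftrightarrow> ((d \<in> Y) \<noteq> (\<alpha> d \<in> Y))"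
  shows "\<delta>\<^sub>1 (steps_of X Y) = {}"
proof -
  have "even (card (steps_of X Y \<inter> cell_boundary c))" if "c \<in> cells" for c
    using that
  proof (cases rule: cellsE)
    case (edge e)
    then obtain d where d: "d \<in> D" "c = edge_cell d" unfolding edges_def edge_cell_def by auto
    then show ?thesis using edge_even[OF d(1)] card_steps_of_cell_boundary(3)[OF assms(1,2) d(1)] by auto
  qed (use card_steps_of_cell_boundary[OF assms(1,2)] vertex_even face_even in auto)
  then show ?thesis unfolding \<delta>\<^sub>1_def by auto
qed

lemma \<delta>\<^sub>0_subset: "\<delta>\<^sub>0 L \<subseteq> steps"
  unfolding \<delta>\<^sub>0_def by (rule steps_of_subset[OF orientation_of_subset dual_orientation_of_subset])

lemma \<delta>\<^sub>1_\<delta>\<^sub>0: "\<delta>\<^sub>1 (\<delta>\<^sub>0 L) = {}"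
  unfolding \<delta>\<^sub>0_def
proof (rule \<delta>\<^sub>1_steps_of_eq_empty[OF orientation_of_subset dual_orientation_of_subset])
  fix v assume "v \<in> verts D \<sigma>"
  then obtain x where x: "x \<in> D" "v = orb \<sigma> x" unfolding verts_def by auto
  show "even (card (v \<inter> orientation_of L))"
    unfolding x(2) card_vert_orientation_of[OF x(1)]
    using even_card_changes_along_bij[OF rotation.finite_orb rotation.bij_betw_orb, OF x(1) x(1)] .
next
  fix f assume "f \<in> faces D \<alpha> \<sigma>"
  then obtain x where x: "x \<in> D" "f = orb \<phi> x" unfolding faces_def by auto
  show "even (card {d \<in> dual_orientation_of L. \<alpha> d \<in> f})"
    unfolding x(2) card_face_dual_orientation_of[OF x(1)]
    using even_card_changes_along_bij[OF face_perm.finite_orb face_perm.bij_betw_orb, OF x(1) x(1)] .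
qed (rule antipodal_orientation_iff)

text \<open>The sphere has no first cohomology: \<delta>0 has rank n - 1, its kernel being {{}, D} by
  connectedness, and the image of \<delta>1 contains all even sets of the n + 2 cells (Euler's
  formula), so the ranks exhaust the 2n steps (n = card D).\<close>

theorem cocycle_is_coboundary:
  assumes "z \<subseteq> steps" "\<delta>\<^sub>1 z = {}"
  shows "\<exists>L \<subseteq> D. \<delta>\<^sub>0 L = z"
proof -
  have "\<delta>\<^sub>0 ` Pow D = {z \<in> Pow steps. \<delta>\<^sub>1 z = {}}"
  proof (rule image_eq_kernel_if_card_le[OF finite_steps])
    show "\<delta>\<^sub>1 (sym_diff z w) = sym_diff (\<delta>\<^sub>1 z) (\<delta>\<^sub>1 w)" if "z \<subseteq> steps" "w \<subseteq> steps" for z w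
      using that finite_steps finite_subset \<delta>\<^sub>1_sym_diff by metis
    show "\<delta>\<^sub>0 ` Pow D \<subseteq> {z \<in> Pow steps. \<delta>\<^sub>1 z = {}}"
      using \<delta>\<^sub>0_subset \<delta>\<^sub>1_\<delta>\<^sub>0 by auto
    have "card D > 0" using finite_darts darts_nonempty by (simp add: card_gt_0_iff)
    then have "card D - 1 + (card D + 1) = card steps"
      using finite_darts by (simp add: steps_def card_cartesian_product)
    then have "card (Pow steps) = 2 ^ (card D - 1 + (card D + 1))"
      using card_Pow[OF finite_steps] by simp
    also have "\<dots> = 2 ^ (card D - 1) * 2 ^ (card D + 1)" by (rule power_add)
    finally show "card (Pow steps) \<le> card (\<delta>\<^sub>0 ` Pow D) * card (\<delta>\<^sub>1 ` Pow steps)"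
      using card_image_\<delta>\<^sub>0 card_image_\<delta>\<^sub>1 by simp
  qed
  then have "z \<in> \<delta>\<^sub>0 ` Pow D" using assms by blast
  then show ?thesis by blast
qed

end

section \<open>The outer face and its arcs\<close>

locale plane_graph_with_poles = plane_graph D \<alpha> \<sigma> for D :: "'a set" and \<alpha> \<sigma> +
  fixes out s0 s1 :: "'a set"
  assumes out: "out \<in> faces D \<alpha> \<sigma>"
    and s0: "s0 \<in> verts D \<sigma>" and s1: "s1 \<in> verts D \<sigma>" and s0_neq_s1: "s0 \<noteq> s1"
    and s0_out: "s0 \<inter> out \<noteq> {}" and s1_out: "s1 \<inter> out \<noteq> {}"
begin

definition at_pole :: "'a \<Rightarrow> bool" where
  "at_pole d \<longleftrightarrow> orb \<sigma> d = s0 \<or> orb \<sigma> d = s1"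

definition last_pole :: "'a \<Rightarrow> 'a \<Rightarrow> nat \<Rightarrow> bool" where
  "last_pole d e n \<longleftrightarrow>
     e \<in> D \<and> at_pole e \<and> (\<psi> ^^ n) e = d \<and> (\<forall>m. 0 < m \<and> m \<le> n \<longrightarrow> \<not> at_pole ((\<psi> ^^ m) e))"

lemma last_pole_unique:
  assumes "last_pole d e n" "last_pole d e' n'"
  shows "e = e'"
proof -
  have "e = e'" if "last_pole d e n" "last_pole d e' n'" "n \<le> n'" for e e' n n'
  proof -
    have D: "e \<in> D" "e' \<in> D" using that unfolding last_pole_def by auto
    have "(\<psi> ^^ n) ((\<psi> ^^ (n' - n)) e') = (\<psi> ^^ n') e'"
      using that(3) by (simp flip: funpow_add comp_apply[of "\<psi> ^^ n"])
    also have "\<dots> = (\<psi> ^^ n) e" using that(1,2) unfolding last_pole_def by simp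
    finally have "(\<psi> ^^ (n' - n)) e' = e" using side_perm.funpow_inj side_perm.funpow_in D by blast
    moreover have "at_pole e" using that(1) unfolding last_pole_def by simp
    ultimately have "\<not> (0 < n' - n)" using that(2) unfolding last_pole_def by auto
    then show ?thesis using \<open>(\<psi> ^^ (n' - n)) e' = e\<close> by simp
  qed
  then show ?thesis using assms nat_le_linear by metis
qed

lemma in_arc_iff_last_pole:
  assumes "last_pole d e n"
  shows "in_arc D \<alpha> \<sigma> s0 s1 True d \<longleftrightarrow> orb \<sigma> e = s1"
proof
  assume "in_arc D \<alpha> \<sigma> s0 s1 True d"
  then obtain e' n' where "e' \<in> D" "orb \<sigma> e' = s1" "(\<psi> ^^ n') e' = d"
    "\<forall>m. 0 < m \<and> m \<le> n' \<longrightarrow> orb \<sigma> ((\<psi> ^^ m) e') \<notin> {s0, s1}"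
    unfolding in_arc_def by auto
  then have "last_pole d e' n'" unfolding last_pole_def at_pole_def by auto
  then show "orb \<sigma> e = s1" using last_pole_unique[OF assms] \<open>orb \<sigma> e' = s1\<close> by simp
next
  assume "orb \<sigma> e = s1"
  then show "in_arc D \<alpha> \<sigma> s0 s1 True d"
    using assms unfolding in_arc_def last_pole_def at_pole_def by auto
qed

definition start :: 'a where
  "start = (SOME d. d \<in> D \<and> \<alpha> d \<in> out \<and> orb \<sigma> d = s0)"

lemma outer_side_at:
  assumes "s \<in> verts D \<sigma>" "s \<inter> out \<noteq> {}"
  shows "\<exists>d \<in> D. \<alpha> d \<in> out \<and> orb \<sigma> d = s"
proof -
  obtain w where w: "w \<in> s" "w \<in> out" using assms by auto
  then have "w \<in> D" using out face_subset by auto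
  moreover have "\<alpha> (\<sigma> w) \<in> out" using face_eq_orb[OF out w(2)] face_perm.f_in_orb face_perm.self_in_orb by simp
  moreover have "orb \<sigma> (\<sigma> w) = s" using rotation.orb_f vert_eq_orb[OF assms(1) w(1)] calculation by simp
  ultimately show ?thesis using rotation.f_in by blast
qed

lemma start: "start \<in> D" "\<alpha> start \<in> out" "orb \<sigma> start = s0"
  using someI_ex[OF outer_side_at[OF s0 s0_out, unfolded Bex_def]] unfolding start_def by auto

definition side :: "nat \<Rightarrow> 'a" where
  "side i = (\<psi> ^^ i) start"

definition period :: nat where
  "period = funpow_dist1 \<psi> start start"

lemma side_in: "side i \<in> D"
  unfolding side_def using side_perm.funpow_in start(1) by blast

lemma mem_out_iff: "x \<in> out \<longleftrightarrow> x \<in> orb \<phi> (\<alpha> start)"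
  using face_eq_orb[OF out start(2)] by simp

lemma \<alpha>_side_in_out: "\<alpha> (side i) \<in> out"
  unfolding mem_out_iff side_def \<alpha>_funpow_\<psi>[OF start(1)] by (rule face_perm.funpow_in_orb)

lemma outer_side_eq_side:
  assumes "d \<in> D" "\<alpha> d \<in> out"
  shows "\<exists>i < period. d = side i"
proof -
  obtain n where "\<alpha> d = (\<phi> ^^ n) (\<alpha> start)" using assms(2) unfolding mem_out_iff orb_def by auto
  then have "d = (\<psi> ^^ n) start"
    using \<alpha>_funpow_\<psi>[OF start(1)] \<alpha>_\<alpha> assms(1) side_perm.funpow_in start(1) by metis
  then have "d \<in> orb \<psi> start" using side_perm.funpow_in_orb by simp
  then show ?thesis unfolding side_perm.orb_eq_image_period[OF start(1)] side_def period_def by auto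
qed

lemma side_inj: "i < period \<Longrightarrow> j < period \<Longrightarrow> side i = side j \<Longrightarrow> i = j"
  using side_perm.inj_on_period[OF start(1)] unfolding side_def period_def inj_on_def by blast

lemma \<sigma>inv_side_Suc: "\<sigma>inv (side (Suc i)) = \<alpha> (side i)"
  unfolding side_def using rotation.inv_f \<alpha>_in side_in[unfolded side_def] by simp

lemma funpow_\<psi>_side: "(\<psi> ^^ m) (side j) = side (j + m)"
  unfolding side_def by (metis add.commute comp_apply funpow_add)

lemma pole_side_exists:
  assumes "s \<in> verts D \<sigma>" "s \<inter> out \<noteq> {}"
  shows "\<exists>i < period. orb \<sigma> (side i) = s"
  using outer_side_at[OF assms] outer_side_eq_side by blast

lemma last_pole_side_exists: "\<exists>j \<le> i. at_pole (side j) \<and> (\<forall>k. j < k \<and> k \<le> i \<longrightarrow> \<not> at_pole (side k))"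
proof (induction i)
  case 0
  show ?case using start(3) unfolding side_def at_pole_def by auto
next
  case (Suc i)
  then show ?case by (cases "at_pole (side (Suc i))") (auto simp: le_Suc_eq intro: exI[of _ "Suc i"])
qed

lemma in_arc_side_iff:
  assumes "j \<le> i" "at_pole (side j)" "\<forall>k. j < k \<and> k \<le> i \<longrightarrow> \<not> at_pole (side k)"
  shows "in_arc D \<alpha> \<sigma> s0 s1 True (side i) \<longleftrightarrow> orb \<sigma> (side j) = s1"
proof (rule in_arc_iff_last_pole)
  show "last_pole (side i) (side j) (i - j)"
    unfolding last_pole_def funpow_\<psi>_side using assms side_in by auto
qed

definition outer_changes :: "'a set \<Rightarrow> 'a set" where
  "outer_changes L = {d \<in> dual_orientation_of L. \<alpha> d \<in> out}"

text \<open>corner L i is the label of the angle of the outer face just before side i.\<close>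

definition corner :: "'a set \<Rightarrow> nat \<Rightarrow> bool" where
  "corner L i \<longleftrightarrow> \<sigma>inv (side i) \<in> L"

lemma side_in_outer_changes_iff: "side i \<in> outer_changes L \<longleftrightarrow> corner L i \<noteq> corner L (Suc i)"
  unfolding outer_changes_def dual_orientation_of_def corner_def \<sigma>inv_side_Suc
  using side_in \<alpha>_side_in_out by auto

lemma outer_changes_two_sides:
  assumes "card (outer_changes L) = 2"
  obtains a b where "a < b" "b < period" "outer_changes L = {side a, side b}"
proof -
  obtain x y where xy: "outer_changes L = {x, y}" "x \<noteq> y" using assms card_2_iff by metis
  then have "x \<in> D" "\<alpha> x \<in> out" "y \<in> D" "\<alpha> y \<in> out"
    unfolding outer_changes_def dual_orientation_of_def by auto
  then obtain i j where "i < period" "x = side i" "j < period" "y = side j"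
    using outer_side_eq_side by metis
  then show ?thesis using that xy by (metis insert_commute linorder_neqE_nat)
qed

lemma corner_between:
  assumes "a < b" "b < period" "outer_changes L = {side a, side b}"
  shows "i \<le> period \<Longrightarrow> corner L i \<longleftrightarrow> corner L 0 \<noteq> (a < i \<and> i \<le> b)"
proof (induction i)
  case (Suc i)
  then have "i < period" by (simp only: Suc_le_eq)
  then have "side i \<in> outer_changes L \<longleftrightarrow> i = a \<or> i = b"
    using assms side_inj by auto
  then show ?case using Suc side_in_outer_changes_iff[of i L] assms(1) by auto
qed simp

lemma \<sigma>inv_side_at_vertex: "orb \<sigma> (\<sigma>inv (side j)) = orb \<sigma> (side j)"
  using rotation.orb_inv side_in by blast

lemma corner_start: "s0 \<inter> L = {} \<Longrightarrow> \<not> corner L 0"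
  using \<sigma>inv_side_at_vertex[of 0] start(3) rotation.self_in_orb unfolding corner_def side_def
  by (metis disjoint_iff funpow_0)

text \<open>With L = 0 on s0 and L = 1 on s1 the corners between the two label changes are labelled
  1 and all others 0, so the last pole before the first change is s0 and the last pole before
  the second change is s1.\<close>

lemma one_outer_change_in_arc:
  assumes "s0 \<inter> L = {}" "s1 \<subseteq> L" "card (outer_changes L) = 2"
  shows "card {d \<in> outer_changes L. in_arc D \<alpha> \<sigma> s0 s1 True d} = 1"
proof -
  obtain a b where ab: "a < b" "b < period" "outer_changes L = {side a, side b}"
    using outer_changes_two_sides[OF assms(3)] .
  have pole: "corner L j \<longleftrightarrow> orb \<sigma> (side j) = s1" if "at_pole (side j)" for j
    using that assms(1,2) \<sigma>inv_side_at_vertex[of j] rotation.self_in_orb[of "\<sigma>inv (side j)"] s0_neq_s1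
    unfolding corner_def at_pole_def by auto
  have between: "corner L i \<longleftrightarrow> a < i \<and> i \<le> b" if "i \<le> period" for i
    using corner_between[OF ab that] corner_start[OF assms(1)] by simp
  obtain ja where ja: "ja \<le> a" "at_pole (side ja)" "\<forall>k. ja < k \<and> k \<le> a \<longrightarrow> \<not> at_pole (side k)"
    using last_pole_side_exists by blast
  have "\<not> in_arc D \<alpha> \<sigma> s0 s1 True (side a)"
    using in_arc_side_iff[OF ja] pole[OF ja(2)] between[of ja] ja(1) ab by simp
  moreover have "in_arc D \<alpha> \<sigma> s0 s1 True (side b)"
  proof -
    obtain i1 where i1: "i1 < period" "orb \<sigma> (side i1) = s1" using pole_side_exists[OF s1 s1_out] by blast
    then have "at_pole (side i1)" unfolding at_pole_def by simp
    then have "corner L i1" using pole i1(2) by simp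
    then have "a < i1" "i1 \<le> b" using between[of i1] i1(1) by simp_all
    obtain jb where jb: "jb \<le> b" "at_pole (side jb)" "\<forall>k. jb < k \<and> k \<le> b \<longrightarrow> \<not> at_pole (side k)"
      using last_pole_side_exists by blast
    then have "i1 \<le> jb" using \<open>at_pole (side i1)\<close> \<open>i1 \<le> b\<close> by (meson not_le)
    then have "corner L jb" using between[of jb] \<open>a < i1\<close> jb(1) ab(2) by simp
    then show ?thesis using in_arc_side_iff[OF jb] pole[OF jb(2)] by simp
  qed
  moreover have "side a \<noteq> side b" using side_inj ab by (metis less_trans nat_neq_iff)
  ultimately have "{d \<in> outer_changes L. in_arc D \<alpha> \<sigma> s0 s1 True d} = {side b}" using ab(3) by auto
  then show ?thesis by simp
qed

text \<open>With L = 0 on both poles no pole lies between the two changes, so they lie in one arc.\<close>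

lemma outer_changes_in_same_arc:
  assumes "s0 \<inter> L = {}" "s1 \<inter> L = {}" "card (outer_changes L) = 2"
  shows "card {d \<in> outer_changes L. in_arc D \<alpha> \<sigma> s0 s1 True d} \<noteq> 1"
proof -
  obtain a b where ab: "a < b" "b < period" "outer_changes L = {side a, side b}"
    using outer_changes_two_sides[OF assms(3)] .
  have pole: "\<not> corner L j" if "at_pole (side j)" for j
    using that assms(1,2) \<sigma>inv_side_at_vertex[of j] rotation.self_in_orb[of "\<sigma>inv (side j)"]
    unfolding corner_def at_pole_def by auto
  obtain jb where jb: "jb \<le> b" "at_pole (side jb)" "\<forall>k. jb < k \<and> k \<le> b \<longrightarrow> \<not> at_pole (side k)"
    using last_pole_side_exists by blast
  then have "jb \<le> a"
    using corner_between[OF ab, of jb] corner_start[OF assms(1)] pole ab(2) by fastforce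
  then have "in_arc D \<alpha> \<sigma> s0 s1 True (side a) \<longleftrightarrow> in_arc D \<alpha> \<sigma> s0 s1 True (side b)"
    using in_arc_side_iff[OF _ jb(2)] jb ab(1) by simp
  moreover have "side a \<noteq> side b" using side_inj ab by (metis less_trans nat_neq_iff)
  ultimately have "{d \<in> outer_changes L. in_arc D \<alpha> \<sigma> s0 s1 True d} = {} \<or>
      {d \<in> outer_changes L. in_arc D \<alpha> \<sigma> s0 s1 True d} = {side a, side b}"
    using ab(3) by auto
  then show ?thesis using \<open>side a \<noteq> side b\<close> by (elim disjE) (simp_all (no_asm_simp))
qed

section \<open>Weak labelings, 2-orientations and 2*-orientations\<close>

lemma dend_fibre_DFace:
  assumes "Y \<subseteq> D" "f \<in> faces D \<alpha> \<sigma>" "f \<noteq> out"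
  shows "{d \<in> Y. dend D \<alpha> \<sigma> out s0 s1 d = DFace f} = {d \<in> Y. \<alpha> d \<in> f}"
  using face_eq_orb[OF assms(2)] face_perm.self_in_orb assms unfolding dend_def by auto

lemma dend_fibre_DOut:
  "{d \<in> Y. dend D \<alpha> \<sigma> out s0 s1 d = DOut b} = {d \<in> Y. \<alpha> d \<in> out \<and> in_arc D \<alpha> \<sigma> s0 s1 True d = b}"
  using face_eq_orb[OF out] face_perm.self_in_orb unfolding dend_def by auto

lemma card_outer_sides_eq:
  assumes "Y \<subseteq> D"
  shows "card {d \<in> Y. \<alpha> d \<in> out} =
    card {d \<in> Y. \<alpha> d \<in> out \<and> in_arc D \<alpha> \<sigma> s0 s1 True d} +
    card {d \<in> Y. \<alpha> d \<in> out \<and> \<not> in_arc D \<alpha> \<sigma> s0 s1 True d}"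
proof -
  have "card {d \<in> Y. \<alpha> d \<in> out} = card ({d \<in> Y. \<alpha> d \<in> out \<and> in_arc D \<alpha> \<sigma> s0 s1 True d} \<union>
      {d \<in> Y. \<alpha> d \<in> out \<and> \<not> in_arc D \<alpha> \<sigma> s0 s1 True d})"
    by (rule arg_cong[of _ _ card]) auto
  also have "\<dots> = card {d \<in> Y. \<alpha> d \<in> out \<and> in_arc D \<alpha> \<sigma> s0 s1 True d} +
      card {d \<in> Y. \<alpha> d \<in> out \<and> \<not> in_arc D \<alpha> \<sigma> s0 s1 True d}"
    by (rule card_Un_disjoint) (use finite_subset[OF assms finite_darts] in auto)
  finally show ?thesis .
qed

lemma two_star_orientations_iff:
  "Y \<in> two_star_orientations D \<alpha> \<sigma> out s0 s1 \<longleftrightarrow>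
     Y \<subseteq> D \<and> (\<forall>d\<in>D. (d \<in> Y) \<noteq> (\<alpha> d \<in> Y)) \<and>
     (\<forall>f \<in> faces D \<alpha> \<sigma>. card {d \<in> Y. \<alpha> d \<in> f} = 2) \<and>
     card {d \<in> Y. \<alpha> d \<in> out \<and> in_arc D \<alpha> \<sigma> s0 s1 True d} = 1"
  (is "_ \<longleftrightarrow> Y \<subseteq> D \<and> ?antipodal \<and> ?faces \<and> ?arc")
proof
  assume Y: "Y \<in> two_star_orientations D \<alpha> \<sigma> out s0 s1"
  then have YD: "Y \<subseteq> D" unfolding two_star_orientations_def by simp
  have inner: "card {d \<in> Y. \<alpha> d \<in> f} = 2" if "f \<in> faces D \<alpha> \<sigma>" "f \<noteq> out" for f
  proof -
    have "DFace f \<in> split_dual_verts D \<alpha> \<sigma> out" using that unfolding split_dual_verts_def by blast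
    then show ?thesis using Y dend_fibre_DFace[OF YD that] unfolding two_star_orientations_def by force
  qed
  have arc: "card {d \<in> Y. \<alpha> d \<in> out \<and> in_arc D \<alpha> \<sigma> s0 s1 True d = b} = 1" for b
    using Y dend_fibre_DOut[of Y b] unfolding two_star_orientations_def split_dual_verts_def
    by (cases b) auto
  have "card {d \<in> Y. \<alpha> d \<in> out} = 2"
    using card_outer_sides_eq[OF YD] arc[of True] arc[of False] by simp
  then have ?faces using inner by metis
  then show "Y \<subseteq> D \<and> ?antipodal \<and> ?faces \<and> ?arc"
    using Y arc[of True] unfolding two_star_orientations_def by simp
next
  assume Y: "Y \<subseteq> D \<and> ?antipodal \<and> ?faces \<and> ?arc"
  then have YD: "Y \<subseteq> D" by simp
  have "card {d \<in> Y. \<alpha> d \<in> out \<and> \<not> in_arc D \<alpha> \<sigma> s0 s1 True d} = 1"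
    using card_outer_sides_eq[OF YD] Y out by simp
  then have arc: "card {d \<in> Y. \<alpha> d \<in> out \<and> in_arc D \<alpha> \<sigma> s0 s1 True d = b} = 1" for b
    using Y by (cases b) simp_all
  have "card {d \<in> Y. dend D \<alpha> \<sigma> out s0 s1 d = x} = (case x of DOut _ \<Rightarrow> 1 | DFace _ \<Rightarrow> 2)"
    if "x \<in> split_dual_verts D \<alpha> \<sigma> out" for x
  proof (cases x)
    case (DFace f)
    then have "f \<in> faces D \<alpha> \<sigma>" "f \<noteq> out" using that unfolding split_dual_verts_def by auto
    then show ?thesis using dend_fibre_DFace[OF YD] Y DFace by simp
  qed (simp add: dend_fibre_DOut arc)
  then show "Y \<in> two_star_orientations D \<alpha> \<sigma> out s0 s1"
    using Y unfolding two_star_orientations_def by simp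
qed

lemma card_edges_eq_twice_card_faces:
  assumes "Y \<in> two_star_orientations D \<alpha> \<sigma> out s0 s1"
  shows "card (edges D \<alpha>) = 2 * card (faces D \<alpha> \<sigma>)"
proof -
  have YD: "Y \<subseteq> D" and Y_antipodal: "\<And>d. d \<in> D \<Longrightarrow> (d \<in> Y) \<noteq> (\<alpha> d \<in> Y)"
    and Y2: "\<And>f. f \<in> faces D \<alpha> \<sigma> \<Longrightarrow> card {d \<in> Y. \<alpha> d \<in> f} = 2"
    using assms unfolding two_star_orientations_iff by auto
  have "card (edges D \<alpha>) = card Y" using card_eq_card_edges[OF YD Y_antipodal] by simp
  also have "\<dots> = (\<Sum>f \<in> faces D \<alpha> \<sigma>. card {d \<in> Y. \<alpha> d \<in> f})"
    using finite_subset[OF YD finite_darts] finite_faces disjoint_faces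
    by (rule card_eq_sum_card_fibres) (use YD \<alpha>_in Union_faces in blast)
  also have "\<dots> = 2 * card (faces D \<alpha> \<sigma>)" using Y2 by simp
  finally show ?thesis .
qed

lemma card_edges_eq_sum_outdegrees:
  assumes "X \<in> two_orientations D \<alpha> \<sigma> s0 s1"
  shows "card (edges D \<alpha>) = 2 * (card (verts D \<sigma>) - 2) + card (s0 \<inter> X) + card (s1 \<inter> X)"
proof -
  let ?V = "verts D \<sigma>"
  have XD: "X \<subseteq> D" and X_antipodal: "\<And>d. d \<in> D \<Longrightarrow> (d \<in> X) \<noteq> (\<alpha> d \<in> X)"
    and X2: "\<And>v. v \<in> ?V - {s0, s1} \<Longrightarrow> card (v \<inter> X) = 2"
    using assms unfolding two_orientations_def by auto
  have "card (edges D \<alpha>) = card X" using card_eq_card_edges[OF XD X_antipodal] by simp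
  also have "\<dots> = (\<Sum>v \<in> ?V. card {d \<in> X. d \<in> v})"
    using finite_subset[OF XD finite_darts] finite_verts disjoint_verts
    by (rule card_eq_sum_card_fibres) (use XD Union_verts in blast)
  also have "\<dots> = (\<Sum>v \<in> ?V - {s0, s1}. card {d \<in> X. d \<in> v}) + (\<Sum>v \<in> {s0, s1}. card {d \<in> X. d \<in> v})"
    using s0 s1 finite_verts by (intro sum.subset_diff) auto
  also have "\<dots> = 2 * card (?V - {s0, s1}) + card (s0 \<inter> X) + card (s1 \<inter> X)"
    using X2 s0_neq_s1 by (simp add: Int_def conj_commute)
  finally show ?thesis
    using s0 s1 s0_neq_s1 finite_verts by (simp add: card_Diff_subset)
qed

text \<open>Double counting: by Euler's formula the outdegree 2 at all vertices but the poles already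
  accounts for every edge.\<close>

lemma poles_outdegree_zero:
  assumes "X \<in> two_orientations D \<alpha> \<sigma> s0 s1" "Y \<in> two_star_orientations D \<alpha> \<sigma> out s0 s1"
  shows "s0 \<inter> X = {}" "s1 \<inter> X = {}"
proof -
  have "card (verts D \<sigma>) \<ge> 2"
    using card_mono[OF finite_verts, of "{s0, s1}"] s0 s1 s0_neq_s1 by simp
  then have "card (s0 \<inter> X) + card (s1 \<inter> X) = 0"
    using card_edges_eq_sum_outdegrees[OF assms(1)] card_edges_eq_twice_card_faces[OF assms(2)] euler_nat
    by linarith
  moreover have "finite X" using assms(1) finite_darts finite_subset unfolding two_orientations_def by auto
  ultimately show "s0 \<inter> X = {}" "s1 \<inter> X = {}" by auto
qed

lemma weak_labeling_iff:
  assumes "l \<in> D \<rightarrow>\<^sub>E {0, 1}"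
  shows "weak_labeling D \<alpha> \<sigma> s0 s1 l \<longleftrightarrow>
    s0 \<inter> ones l = {} \<and> s1 \<subseteq> ones l \<and> orientation_of (ones l) \<in> two_orientations D \<alpha> \<sigma> s0 s1 \<and>
    (\<forall>f \<in> faces D \<alpha> \<sigma>. card {d \<in> dual_orientation_of (ones l). \<alpha> d \<in> f} = 2)"
proof -
  have "l d \<in> {0, 1}" if "d \<in> D" for d using assms that by auto
  then have "(\<forall>d\<in>s0. l d = 0) \<longleftrightarrow> s0 \<inter> ones l = {}" "(\<forall>d\<in>s1. l d = 1) \<longleftrightarrow> s1 \<subseteq> ones l"
    using vert_subset[OF s0] vert_subset[OF s1] unfolding ones_def by auto
  then show ?thesis
    using assms card_vert_label_changes edge_label_condition_iff card_face_label_changes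
    unfolding weak_labeling_def two_orientations_def by (simp add: orientation_of_subset) blast
qed

lemma orientations_of_weak_labeling:
  assumes "weak_labeling D \<alpha> \<sigma> s0 s1 l"
  shows "orientation_of (ones l) \<in> two_orientations D \<alpha> \<sigma> s0 s1"
    and "dual_orientation_of (ones l) \<in> two_star_orientations D \<alpha> \<sigma> out s0 s1"
proof -
  have l: "l \<in> D \<rightarrow>\<^sub>E {0, 1}" using assms unfolding weak_labeling_def by simp
  let ?L = "ones l"
  have wl: "s0 \<inter> ?L = {}" "s1 \<subseteq> ?L" "orientation_of ?L \<in> two_orientations D \<alpha> \<sigma> s0 s1"
    and faces: "\<forall>f \<in> faces D \<alpha> \<sigma>. card {d \<in> dual_orientation_of ?L. \<alpha> d \<in> f} = 2"
    using assms unfolding weak_labeling_iff[OF l] by auto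
  then show "orientation_of ?L \<in> two_orientations D \<alpha> \<sigma> s0 s1" by simp
  have "card (outer_changes ?L) = 2" using faces out unfolding outer_changes_def by simp
  then have "card {d \<in> outer_changes ?L. in_arc D \<alpha> \<sigma> s0 s1 True d} = 1"
    using one_outer_change_in_arc wl(1,2) by simp
  then have arc: "card {d \<in> dual_orientation_of ?L. \<alpha> d \<in> out \<and> in_arc D \<alpha> \<sigma> s0 s1 True d} = 1"
    unfolding outer_changes_def by (simp add: conj_assoc)
  have "(d \<in> dual_orientation_of ?L) \<noteq> (\<alpha> d \<in> dual_orientation_of ?L)" if "d \<in> D" for d
    using wl(3) antipodal_orientation_iff[OF that, of ?L] that unfolding two_orientations_def by simp
  then show "dual_orientation_of ?L \<in> two_star_orientations D \<alpha> \<sigma> out s0 s1"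
    unfolding two_star_orientations_iff using dual_orientation_of_subset faces arc by blast
qed

lemma weak_labeling_eqI:
  assumes "weak_labeling D \<alpha> \<sigma> s0 s1 l" "weak_labeling D \<alpha> \<sigma> s0 s1 l'"
    and "orientation_of (ones l) = orientation_of (ones l')"
    and "dual_orientation_of (ones l) = dual_orientation_of (ones l')"
  shows "l = l'"
proof -
  have l: "l \<in> D \<rightarrow>\<^sub>E {0, 1}" "l' \<in> D \<rightarrow>\<^sub>E {0, 1}" using assms(1,2) unfolding weak_labeling_def by auto
  have s0_disjoint: "s0 \<inter> ones l = {}" "s0 \<inter> ones l' = {}"
    using assms(1,2) unfolding weak_labeling_iff[OF l(1)] weak_labeling_iff[OF l(2)] by auto
  have "\<delta>\<^sub>0 (ones l) = \<delta>\<^sub>0 (ones l')" unfolding \<delta>\<^sub>0_def using assms(3,4) by simp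
  then have "\<delta>\<^sub>0 (sym_diff (ones l) (ones l')) = {}" unfolding \<delta>\<^sub>0_sym_diff by simp
  moreover have "sym_diff (ones l) (ones l') \<subseteq> D" using ones_subset by blast
  ultimately have "sym_diff (ones l) (ones l') = {} \<or> sym_diff (ones l) (ones l') = D"
    by (intro \<delta>\<^sub>0_eq_empty)
  moreover obtain w where "w \<in> s0" using vert_nonempty[OF s0] by blast
  then have "w \<in> D" "w \<notin> sym_diff (ones l) (ones l')" using s0_disjoint vert_subset[OF s0] by auto
  ultimately have "sym_diff (ones l) (ones l') = {}" by blast
  then have "ones l = ones l'" by blast
  then show ?thesis using ones_inj l by blast
qed

lemma \<delta>\<^sub>1_steps_of_orientations:
  assumes X: "X \<in> two_orientations D \<alpha> \<sigma> s0 s1" and Y: "Y \<in> two_star_orientations D \<alpha> \<sigma> out s0 s1"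
  shows "\<delta>\<^sub>1 (steps_of X Y) = {}"
proof (rule \<delta>\<^sub>1_steps_of_eq_empty)
  show "even (card (v \<inter> X))" if "v \<in> verts D \<sigma>" for v
    using X poles_outdegree_zero[OF X Y] that unfolding two_orientations_def
    by (cases "v = s0 \<or> v = s1") auto
qed (use X Y in \<open>auto simp: two_orientations_def two_star_orientations_iff\<close>)

text \<open>The coboundaries L with given (X, Y) are a set and its complement.  Both are constant on
  the poles, which have outdegree 0; complementing makes L vanish on s0, and then L cannot also
  vanish on s1, since X* has outdegree 1 at both o*_0 and o*_1.\<close>

lemma labels_of_orientations:
  assumes X: "X \<in> two_orientations D \<alpha> \<sigma> s0 s1" and Y: "Y \<in> two_star_orientations D \<alpha> \<sigma> out s0 s1"
  obtains L where "L \<subseteq> D" "orientation_of L = X" "dual_orientation_of L = Y" "s0 \<inter> L = {}" "s1 \<subseteq> L"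
proof -
  note poles = poles_outdegree_zero[OF X Y]
  have XD: "X \<subseteq> D" and YD: "Y \<subseteq> D" using X Y unfolding two_orientations_def two_star_orientations_def by auto
  obtain L0 where L0: "L0 \<subseteq> D" "\<delta>\<^sub>0 L0 = steps_of X Y"
    using cocycle_is_coboundary[OF steps_of_subset[OF XD YD] \<delta>\<^sub>1_steps_of_orientations[OF X Y]] by blast
  then have XY0: "orientation_of L0 = X" "dual_orientation_of L0 = Y"
    using steps_of_inject[of "orientation_of L0" "dual_orientation_of L0" X Y] unfolding \<delta>\<^sub>0_def by simp_all
  obtain L where L: "L \<subseteq> D" "orientation_of L = X" "dual_orientation_of L = Y" "s0 \<inter> L = {}"
  proof (cases "s0 \<inter> L0 = {}")
    case True
    then show ?thesis using that L0(1) XY0 by blast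
  next
    case False
    have "s0 \<inter> orientation_of L0 = {}" using poles(1) XY0(1) by simp
    then have "s0 \<subseteq> L0" using constant_on_vert[OF s0] False by blast
    then have "s0 \<inter> (D - L0) = {}" by blast
    then show ?thesis
      using that[of "D - L0"] XY0 orientation_of_compl[of L0] dual_orientation_of_compl[of L0] by simp
  qed
  have "s1 \<inter> orientation_of L = {}" using poles(2) L(2) by simp
  then have "s1 \<subseteq> L \<or> s1 \<inter> L = {}" by (rule constant_on_vert[OF s1])
  moreover have "outer_changes L = {d \<in> Y. \<alpha> d \<in> out}" unfolding outer_changes_def L(3) ..
  then have "card (outer_changes L) = 2" "card {d \<in> outer_changes L. in_arc D \<alpha> \<sigma> s0 s1 True d} = 1"
    using Y out unfolding two_star_orientations_iff by (simp_all add: conj_assoc)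
  then have "s1 \<inter> L \<noteq> {}" using outer_changes_in_same_arc L(4) by blast
  ultimately show ?thesis using that L by blast
qed

lemma weak_labeling_of_orientations:
  assumes X: "X \<in> two_orientations D \<alpha> \<sigma> s0 s1" and Y: "Y \<in> two_star_orientations D \<alpha> \<sigma> out s0 s1"
  obtains l where "weak_labeling D \<alpha> \<sigma> s0 s1 l"
    "orientation_of (ones l) = X" "dual_orientation_of (ones l) = Y"
proof -
  obtain L where L: "L \<subseteq> D" "orientation_of L = X" "dual_orientation_of L = Y" "s0 \<inter> L = {}" "s1 \<subseteq> L"
    using labels_of_orientations[OF X Y] .
  define l :: "'a \<Rightarrow> nat" where "l = restrict (\<lambda>d. of_bool (d \<in> L)) D"
  have l: "l \<in> D \<rightarrow>\<^sub>E {0, 1}" "ones l = L" unfolding l_def using ones_restrict[OF L(1)] by auto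
  have "weak_labeling D \<alpha> \<sigma> s0 s1 l"
    unfolding weak_labeling_iff[OF l(1)] l(2) L(2,3) using L(4,5) X Y
    unfolding two_star_orientations_iff by blast
  then show thesis using that l(2) L(2,3) by blast
qed

theorem bij_betw_weak_labelings_orientations:
  "bij_betw (\<lambda>l. (orientation_of (ones l), dual_orientation_of (ones l)))
     (weak_labelings D \<alpha> \<sigma> s0 s1) (two_orientations D \<alpha> \<sigma> s0 s1 \<times> two_star_orientations D \<alpha> \<sigma> out s0 s1)"
proof (rule bij_betw_imageI)
  show "inj_on (\<lambda>l. (orientation_of (ones l), dual_orientation_of (ones l))) (weak_labelings D \<alpha> \<sigma> s0 s1)"
    using weak_labeling_eqI by (auto simp: inj_on_def weak_labelings_def)
  show "(\<lambda>l. (orientation_of (ones l), dual_orientation_of (ones l))) ` weak_labelings D \<alpha> \<sigma> s0 s1 =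
      two_orientations D \<alpha> \<sigma> s0 s1 \<times> two_star_orientations D \<alpha> \<sigma> out s0 s1"
  proof (intro equalityI subsetI)
    fix XY assume "XY \<in> (\<lambda>l. (orientation_of (ones l), dual_orientation_of (ones l))) ` weak_labelings D \<alpha> \<sigma> s0 s1"
    then show "XY \<in> two_orientations D \<alpha> \<sigma> s0 s1 \<times> two_star_orientations D \<alpha> \<sigma> out s0 s1"
      using orientations_of_weak_labeling unfolding weak_labelings_def by auto
  next
    fix XY assume "XY \<in> two_orientations D \<alpha> \<sigma> s0 s1 \<times> two_star_orientations D \<alpha> \<sigma> out s0 s1"
    then obtain l where "weak_labeling D \<alpha> \<sigma> s0 s1 l"
      "XY = (orientation_of (ones l), dual_orientation_of (ones l))"
      using weak_labeling_of_orientations by (metis mem_Times_iff prod.collapse)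
    then show "XY \<in> (\<lambda>l. (orientation_of (ones l), dual_orientation_of (ones l))) ` weak_labelings D \<alpha> \<sigma> s0 s1"
      unfolding weak_labelings_def by blast
  qed
qed

end

theorem proposition4:
  fixes D :: "'d set" and \<alpha> \<sigma> :: "'d \<Rightarrow> 'd" and out s0 s1 :: "'d set"
  assumes "plane_map D \<alpha> \<sigma>"
    and "out \<in> faces D \<alpha> \<sigma>"
    and "s0 \<in> verts D \<sigma>" and "s1 \<in> verts D \<sigma>" and "s0 \<noteq> s1"
    and "s0 \<inter> out \<noteq> {}" and "s1 \<inter> out \<noteq> {}"
  shows "\<exists>f. bij_betw f (weak_labelings D \<alpha> \<sigma> s0 s1)
                 (two_orientations D \<alpha> \<sigma> s0 s1 \<times> two_star_orientations D \<alpha> \<sigma> out s0 s1)"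
proof -
  interpret plane_graph_with_poles D \<alpha> \<sigma> out s0 s1
    using assms by unfold_locales (auto simp: plane_graph_def)
  show ?thesis using bij_betw_weak_labelings_orientations by blast
qed

end
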